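(* Let $X$ and $Y$ be rearrangement invariant spaces of complex valued functions on $\mathbb R^n$ and let $\alpha\in\mathcal A$. Let $u$ and $v$ be non-negative measurable functions on $\mathbb R^n$ such that $v$ is not almost everywhere zero. Suppose there exists $C>0$ such that, whenever $f$ is integrable and $uf\in X$, we have $v\widehat f\in Y$ and \[ \|v\widehat f\|_Y\le C\|uf\|_X. \] Then: $u>0$ almost everywhere; $v*q_1$ is bounded above; $0<v*\alpha<\infty$ almost everywhere; and, whenever $f$ is integrable and $uf\in X$, we have $(v*\alpha)\widehat f\in Y$ and \[ \|(v*\alpha)\widehat f\|_Y\le C\|uf\|_X. \]
   Context: The Fourier transform of an integrable $f\colon\mathbb R^n\to\mathbb C$ is $\widehat f(x)=\int_{\mathbb R^n}e^{-2\pi i x\cdot t}f(t)\,dt$. $\mathcal A=\{\alpha\colon\mathbb R^n\to(0,\infty) \text{ measurable}:\int_{\mathbb R^n}\alpha=1\}$. For $r>0$, $Q_r=(-r/2,r/2)^n$ and $q_r=\chi_{Q_r}$. Convolution: $v*\alpha(x)=\int_{\mathbb R^n}v(x-y)\alpha(y)\,dy$. A rearrangement invariant space $X$ (Bennett–Sharpley) is defined by a norm $\rho$ on non-negative measurable functions on $\mathbb R^n$ such that: $\rho(f)=0$ iff $f=0$ a.e., $\rho(af)=a\rho(f)$ for $a\ge0$, $\rho(f+g)\le\rho(f)+\rho(g)$; $0\le g\le f$ a.e. implies $\rho(g)\le\rho(f)$; $0\le f_k\uparrow f$ a.e. implies $\rho(f_k)\uparrow\rho(f)$; $\rho(\chi_E)<\infty$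 for every set $E$ of finite measure; for every $E$ of finite measure there is $C_E$ with $\int_E f\le C_E\rho(f)$; and $\rho(f)=\rho(g)$ whenever $f,g$ are equimeasurable. Then $X=\{f \text{ measurable}:\|f\|_X:=\rho(|f|)<\infty\}$. *)

theory Defs
  imports "HOL-Analysis.Analysis"
begin

definition fourier :: "('a::euclidean_space \<Rightarrow> complex) \<Rightarrow> 'a \<Rightarrow> complex" where
  "fourier f x = (LINT t|lebesgue. cis (- (2 * pi * (x \<bullet> t))) * f t)"

definition cube :: "real \<Rightarrow> 'a::euclidean_space set" where
  "cube r = {x. \<forall>i\<in>Basis. - (r/2) < x \<bullet> i \<and> x \<bullet> i < r/2}"

definition qcube :: "real \<Rightarrow> 'a::euclidean_space \<Rightarrow> real" where
  "qcube r = indicator (cube r)"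

definition alpha_class :: "('a::euclidean_space \<Rightarrow> real) set" where
  "alpha_class = {\<alpha>. \<alpha> \<in> borel_measurable lebesgue \<and> (\<forall>x. 0 < \<alpha> x) \<and>
                     (\<integral>\<^sup>+ x. ennreal (\<alpha> x) \<partial>lebesgue) = 1}"

definition conv :: "('a::euclidean_space \<Rightarrow> real) \<Rightarrow> ('a \<Rightarrow> real) \<Rightarrow> 'a \<Rightarrow> ennreal" where
  "conv v a x = (\<integral>\<^sup>+ y. ennreal (v (x - y) * a y) \<partial>lebesgue)"

definition equimeasurable :: "('a::euclidean_space \<Rightarrow> ennreal) \<Rightarrow> ('a \<Rightarrow> ennreal) \<Rightarrow> bool" where
  "equimeasurable f g \<longleftrightarrow>
     (\<forall>t::ennreal. emeasure lebesgue {x. t < f x} = emeasure lebesgue {x. t < g x})"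

text \<open>Rearrangement invariant Banach function norm (Bennett--Sharpley), acting on
  non-negative Lebesgue measurable functions with values in \<open>[0,\<infinity>]\<close>.\<close>
definition ri_norm :: "(('a::euclidean_space \<Rightarrow> ennreal) \<Rightarrow> ennreal) \<Rightarrow> bool" where
  "ri_norm \<rho> \<longleftrightarrow>
    (\<forall>f\<in>borel_measurable lebesgue. \<rho> f = 0 \<longleftrightarrow> (AE x in lebesgue. f x = 0)) \<and>
    (\<forall>f\<in>borel_measurable lebesgue. \<forall>a::real. a \<ge> 0 \<longrightarrow>
        \<rho> (\<lambda>x. ennreal a * f x) = ennreal a * \<rho> f) \<and>
    (\<forall>f\<in>borel_measurable lebesgue. \<forall>g\<in>borel_measurable lebesgue.
        \<rho> (\<lambda>x. f x + g x) \<le> \<rho> f + \<rho> g) \<and>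
    (\<forall>f\<in>borel_measurable lebesgue. \<forall>g\<in>borel_measurable lebesgue.
        (AE x in lebesgue. g x \<le> f x) \<longrightarrow> \<rho> g \<le> \<rho> f) \<and>
    (\<forall>F f. (\<forall>k. F k \<in> borel_measurable lebesgue) \<longrightarrow> f \<in> borel_measurable lebesgue \<longrightarrow>
        (AE x in lebesgue. incseq (\<lambda>k. F k x) \<and> f x = (SUP k. F k x)) \<longrightarrow>
        \<rho> f = (SUP k. \<rho> (F k))) \<and>
    (\<forall>E\<in>sets lebesgue. emeasure lebesgue E < \<infinity> \<longrightarrow> \<rho> (indicator E) < \<infinity>) \<and>
    (\<forall>E\<in>sets lebesgue. emeasure lebesgue E < \<infinity> \<longrightarrow>
        (\<exists>C::real. \<forall>f\<in>borel_measurable lebesgue.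
            (\<integral>\<^sup>+ x\<in>E. f x \<partial>lebesgue) \<le> ennreal C * \<rho> f)) \<and>
    (\<forall>f\<in>borel_measurable lebesgue. \<forall>g\<in>borel_measurable lebesgue.
        equimeasurable f g \<longrightarrow> \<rho> f = \<rho> g)"

definition ri_norm_of :: "(('a::euclidean_space \<Rightarrow> ennreal) \<Rightarrow> ennreal) \<Rightarrow> ('a \<Rightarrow> complex) \<Rightarrow> ennreal" where
  "ri_norm_of \<rho> f = \<rho> (\<lambda>x. ennreal (cmod (f x)))"

definition in_ri_space :: "(('a::euclidean_space \<Rightarrow> ennreal) \<Rightarrow> ennreal) \<Rightarrow> ('a \<Rightarrow> complex) \<Rightarrow> bool" where
  "in_ri_space \<rho> f \<longleftrightarrow> f \<in> borel_measurable lebesgue \<and> ri_norm_of \<rho> f < \<infinity>"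

end

theory Submission
  imports Defs "HOL-Probability.Probability_Measure"
begin

text \<open>
  Modulating \<open>f\<close> by a character translates \<open>\<hat>f\<close>, and rearrangement invariance makes
  \<open>\<parallel>\<cdot>\<parallel>\<^sub>Y\<close> translation invariant, so the hypothesis bounds \<open>\<parallel>v(\<cdot> - y) \<bar>\<hat>f\<bar>\<parallel>\<^sub>Y\<close> by
  \<open>C \<parallel>u f\<parallel>\<^sub>X\<close> uniformly in \<open>y\<close>. Averaging over \<open>y\<close> against the probability density \<open>\<alpha>\<close>
  bounds \<open>(v * \<alpha>) \<bar>\<hat>f\<bar>\<close> in the same way. This Minkowski inequality for rearrangement
  invariant norms is proved without duality: the truncated integral \<open>\<integral> v(x - y) \<alpha>(y) dy\<close> is
  approximated by averages of \<open>v(x - y\<^sub>1), \<dots>, v(x - y\<^sub>n)\<close>, where each new point \<open>y\<^sub>n\<close> is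
  chosen so that its deviation from the integral has nonpositive \<open>L\<^sup>2\<close> correlation with the
  accumulated error. The error then grows only like \<open>\<surd>n\<close>, a subsequence of the averages
  converges almost everywhere, and the Fatou property of the norm concludes.

  The remaining claims come from testing the inequality with indicators of small sets. If \<open>u\<close>
  vanished on a set of positive measure, the indicator of a bounded part of it would force
  \<open>(v * \<alpha>) \<bar>\<hat>f\<bar> = 0\<close> almost everywhere, although both factors are positive near the
  origin. The indicator of the part of a small ball where \<open>u\<close> is bounded has a Fourier
  transform that is bounded below on the unit cube; this bounds \<open>\<parallel>v(\<cdot> - y) q\<^sub>1\<parallel>\<^sub>Y\<close>
  uniformly in \<open>y\<close>, hence \<open>v * q\<^sub>1\<close>, and, after averaging, the integrals of \<open>v * \<alpha>\<close> over
  translates of the cube.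
\<close>

lemma borel_measurable_lebesgue_if_borel:
  assumes "f \<in> borel_measurable borel"
  shows "f \<in> borel_measurable (lebesgue :: 'a::euclidean_space measure)"
  using assms by (intro measurable_completion) simp

definition lebesgue_preserving :: "('a::euclidean_space \<Rightarrow> 'a) \<Rightarrow> bool" where
  "lebesgue_preserving T \<longleftrightarrow> T \<in> lebesgue \<rightarrow>\<^sub>M lebesgue \<and> distr lebesgue lebesgue T = lebesgue"

lemma lebesgue_preserving_reflections:
  fixes c :: "'a::euclidean_space \<Rightarrow> real"
  assumes "\<And>j. j \<in> Basis \<Longrightarrow> \<bar>c j\<bar> = 1"
  shows "lebesgue_preserving (\<lambda>x. t + (\<Sum>j\<in>Basis. (c j * (x \<bullet> j)) *\<^sub>R j))"
proof -
  have c: "\<And>j. j \<in> Basis \<Longrightarrow> c j \<noteq> 0" "(\<Prod>j\<in>Basis. \<bar>c j\<bar>) = 1"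
    using assms by (force, simp add: prod.neutral)
  show ?thesis
    using lebesgue_affine_euclidean[where c=c and t=t] lebesgue_affine_measurable[where c=c and t=t] c
    by (simp add: lebesgue_preserving_def density_1)
qed

lemma lebesgue_preserving_add: "lebesgue_preserving (\<lambda>x::'a::euclidean_space. t + x)"
  using lebesgue_preserving_reflections[of "\<lambda>_. 1" t] by (simp add: euclidean_representation)

lemma lebesgue_preserving_diff: "lebesgue_preserving (\<lambda>x::'a::euclidean_space. t - x)"
proof -
  have "(\<Sum>j\<in>Basis. (- 1 * (x \<bullet> j)) *\<^sub>R j) = - x" for x :: 'a
    by (simp add: sum_negf euclidean_representation)
  then show ?thesis
    using lebesgue_preserving_reflections[of "\<lambda>_. -1" t] by simp
qed

lemma lebesgue_preserving_add_right: "lebesgue_preserving (\<lambda>x::'a::euclidean_space. x + t)"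
  using lebesgue_preserving_add[of t] by (simp add: add.commute)

lemma lebesgue_preserving_diff_right: "lebesgue_preserving (\<lambda>x::'a::euclidean_space. x - t)"
  using lebesgue_preserving_add[of "- t"] by simp

lemma measurable_comp_lebesgue_preserving:
  "lebesgue_preserving T \<Longrightarrow> h \<in> lebesgue \<rightarrow>\<^sub>M N \<Longrightarrow> (\<lambda>x. h (T x)) \<in> lebesgue \<rightarrow>\<^sub>M N"
  unfolding lebesgue_preserving_def using measurable_comp[of T lebesgue lebesgue h N]
  by (simp add: o_def)

lemma sets_vimage_lebesgue_preserving:
  "lebesgue_preserving T \<Longrightarrow> A \<in> sets lebesgue \<Longrightarrow> T -` A \<in> sets lebesgue"
  using measurable_sets[of T lebesgue lebesgue A] by (simp add: lebesgue_preserving_def)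

lemma emeasure_vimage_lebesgue_preserving:
  assumes "lebesgue_preserving T" "A \<in> sets lebesgue"
  shows "emeasure lebesgue (T -` A) = emeasure lebesgue A"
  using assms emeasure_distr[of T lebesgue lebesgue A] by (simp add: lebesgue_preserving_def)

lemma nn_integral_lebesgue_preserving:
  assumes "lebesgue_preserving T" "h \<in> borel_measurable lebesgue"
  shows "(\<integral>\<^sup>+x. h (T x) \<partial>lebesgue) = (\<integral>\<^sup>+x. h x \<partial>lebesgue)"
  using assms nn_integral_distr[of T lebesgue lebesgue h] by (simp add: lebesgue_preserving_def)

lemma AE_lebesgue_preserving:
  assumes T: "lebesgue_preserving T" and P: "AE x in lebesgue. P x"
  shows "AE x in lebesgue. P (T x)"
proof -
  from P obtain N where N: "{x. \<not> P x} \<subseteq> N" "N \<in> null_sets lebesgue"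
    by (auto elim!: AE_E simp: null_sets_def)
  then have "T -` N \<in> null_sets lebesgue"
    using sets_vimage_lebesgue_preserving[OF T] emeasure_vimage_lebesgue_preserving[OF T]
    by (auto simp: null_sets_def)
  then show ?thesis
    using N(1) by (auto elim!: AE_I')
qed

lemma emeasure_ball_pos: "0 < r \<Longrightarrow> emeasure lebesgue (ball (0::'a::euclidean_space) r) \<noteq> 0"
  using content_ball_gt_0_iff[of "0::'a" r] emeasure_lborel_ball_finite[of "0::'a" r]
  by (auto simp: emeasure_eq_measure2 less_top)

lemma emeasure_inter_ball_finite:
  "A \<in> sets lebesgue \<Longrightarrow> emeasure lebesgue (A \<inter> ball c r) < \<infinity>"
  using emeasure_mono[of "A \<inter> ball c r" "ball c r" lebesgue] emeasure_lborel_ball_finite[of c r]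
  by auto

lemma exists_sublevel_emeasure_nonzero:
  fixes u :: "'a \<Rightarrow> real"
  assumes A: "A \<in> sets M" "emeasure M A \<noteq> 0" and u: "u \<in> borel_measurable M"
  obtains N :: nat where "emeasure M (A \<inter> {x \<in> space M. u x \<le> real N}) \<noteq> 0"
proof (rule ccontr)
  assume "\<not> thesis"
  then have "A \<inter> {x \<in> space M. u x \<le> real N} \<in> null_sets M" for N
    using that A(1) u by (auto simp: null_sets_def)
  then have "(\<Union>N. A \<inter> {x \<in> space M. u x \<le> real N}) \<in> null_sets M"
    by blast
  moreover have "(\<Union>N. A \<inter> {x \<in> space M. u x \<le> real N}) = A"
    using sets.sets_into_space[OF A(1)] real_arch_simple by blast
  ultimately show False
    using A(2) by (simp add: null_sets_def)
qed

lemma exists_ball_inter_emeasure_nonzero: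
  fixes A :: "'a::euclidean_space set"
  assumes A: "A \<in> sets lebesgue" "emeasure lebesgue A \<noteq> 0"
  obtains r where "0 < r" "emeasure lebesgue (A \<inter> ball 0 r) \<noteq> 0"
proof -
  have "norm \<in> borel_measurable (lebesgue :: 'a measure)"
    by (intro borel_measurable_lebesgue_if_borel borel_measurable_norm)
  then obtain N :: nat where N: "emeasure lebesgue (A \<inter> {x. norm x \<le> real N}) \<noteq> 0"
    using exists_sublevel_emeasure_nonzero[OF A] by auto
  have "A \<inter> {x. norm x \<le> real N} \<subseteq> A \<inter> ball 0 (real N + 1)"
    by auto
  then have "emeasure lebesgue (A \<inter> ball 0 (real N + 1)) \<noteq> 0"
    using N A(1) emeasure_mono[of "A \<inter> {x. norm x \<le> real N}" "A \<inter> ball 0 (real N + 1)" lebesgue]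
    by (auto simp: sets.Int)
  then show thesis
    by (rule that[rotated]) simp
qed

lemma AE_if_AE_on_open_cover:
  fixes P :: "'a::second_countable_topology \<Rightarrow> bool"
  assumes "\<And>U. U \<in> \<U> \<Longrightarrow> open U" "\<Union>\<U> = UNIV"
    and "\<And>U. U \<in> \<U> \<Longrightarrow> AE x in M. x \<in> U \<longrightarrow> P x"
  shows "AE x in M. P x"
proof -
  obtain \<V> where \<V>: "\<V> \<subseteq> \<U>" "countable \<V>" "\<Union>\<V> = UNIV"
    using Lindelof[of \<U>] assms(1,2) by metis
  then have "AE x in M. \<forall>U\<in>\<V>. x \<in> U \<longrightarrow> P x"
    using assms(3) by (subst AE_ball_countable) auto
  then show ?thesis
  proof (rule eventually_mono)
    fix x
    assume "\<forall>U\<in>\<V>. x \<in> U \<longrightarrow> P x"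
    moreover have "x \<in> \<Union>\<V>"
      using \<V>(3) by simp
    ultimately show "P x"
      by blast
  qed
qed

lemma cube_eq_box:
  "cube r = box (\<Sum>b\<in>Basis. (- (r / 2)) *\<^sub>R b) (\<Sum>b\<in>Basis. (r / 2) *\<^sub>R b :: 'a::euclidean_space)"
proof -
  have ip: "(\<Sum>b\<in>Basis. c *\<^sub>R b) \<bullet> i = c" if "i \<in> Basis" for c and i :: 'a
    using that by (rule inner_sum_left_Basis)
  show ?thesis
    unfolding cube_def box_def using ip[of _ "- (r / 2)"] ip[of _ "r / 2"] by auto
qed

lemma open_cube: "open (cube r)"
  unfolding cube_eq_box by (rule open_box)

lemma cube_in_sets_borel [measurable]: "cube r \<in> sets borel"
  using open_cube by (rule borel_open)

lemma cube_in_sets_lebesgue [measurable]: "cube r \<in> sets lebesgue"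
  by (intro sets_completionI_sets) simp

lemma emeasure_cube_finite: "emeasure lebesgue (cube r :: 'a::euclidean_space set) < \<infinity>"
  unfolding cube_eq_box using emeasure_lborel_box_finite by simp

lemma uminus_in_cube_iff [simp]: "- x \<in> cube r \<longleftrightarrow> x \<in> cube r"
  by (auto simp: cube_def)

lemma zero_in_cube: "0 < r \<Longrightarrow> 0 \<in> cube r"
  by (auto simp: cube_def)

lemma norm_le_if_in_cube:
  assumes "x \<in> cube r"
  shows "norm (x::'a::euclidean_space) \<le> real DIM('a) * r / 2"
proof -
  have "norm x \<le> (\<Sum>b\<in>Basis. \<bar>x \<bullet> b\<bar>)"
    by (rule norm_le_l1)
  also have "\<dots> \<le> (\<Sum>b\<in>(Basis::'a set). r / 2)"
    using assms by (intro sum_mono) (auto simp: cube_def abs_less_iff less_imp_le)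
  finally show ?thesis
    by simp
qed

section \<open>Rearrangement invariant norms\<close>

context
  fixes \<rho> :: "('a::euclidean_space \<Rightarrow> ennreal) \<Rightarrow> ennreal"
  assumes \<rho>: "ri_norm \<rho>"
begin

lemma ri_norm_eq_0_iff:
  "f \<in> borel_measurable lebesgue \<Longrightarrow> \<rho> f = 0 \<longleftrightarrow> (AE x in lebesgue. f x = 0)"
  using \<rho> unfolding ri_norm_def by blast

lemma ri_norm_zero: "\<rho> (\<lambda>x. 0) = 0"
  using ri_norm_eq_0_iff[of "\<lambda>x. 0"] by simp

lemma ri_norm_cmult:
  "f \<in> borel_measurable lebesgue \<Longrightarrow> 0 \<le> a \<Longrightarrow> \<rho> (\<lambda>x. ennreal a * f x) = ennreal a * \<rho> f"
  using \<rho> unfolding ri_norm_def by blast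

lemma ri_norm_add:
  "f \<in> borel_measurable lebesgue \<Longrightarrow> g \<in> borel_measurable lebesgue \<Longrightarrow>
    \<rho> (\<lambda>x. f x + g x) \<le> \<rho> f + \<rho> g"
  using \<rho> unfolding ri_norm_def by blast

lemma ri_norm_mono:
  "f \<in> borel_measurable lebesgue \<Longrightarrow> g \<in> borel_measurable lebesgue \<Longrightarrow>
    (AE x in lebesgue. f x \<le> g x) \<Longrightarrow> \<rho> f \<le> \<rho> g"
  using \<rho> unfolding ri_norm_def by blast

lemma ri_norm_cong_AE:
  "f \<in> borel_measurable lebesgue \<Longrightarrow> g \<in> borel_measurable lebesgue \<Longrightarrow>
    (AE x in lebesgue. f x = g x) \<Longrightarrow> \<rho> f = \<rho> g"
  by (intro antisym ri_norm_mono) (auto elim!: eventually_mono)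

lemma ri_norm_SUP:
  "(\<And>k. F k \<in> borel_measurable lebesgue) \<Longrightarrow> f \<in> borel_measurable lebesgue \<Longrightarrow>
    (AE x in lebesgue. incseq (\<lambda>k. F k x) \<and> f x = (SUP k. F k x)) \<Longrightarrow> \<rho> f = (SUP k. \<rho> (F k))"
  using \<rho> unfolding ri_norm_def by blast

lemma ri_norm_indicator_finite:
  "E \<in> sets lebesgue \<Longrightarrow> emeasure lebesgue E < \<infinity> \<Longrightarrow> \<rho> (indicator E) < \<infinity>"
  using \<rho> unfolding ri_norm_def by blast

lemma ri_norm_bounds_set_nn_integral:
  "E \<in> sets lebesgue \<Longrightarrow> emeasure lebesgue E < \<infinity> \<Longrightarrow>
    \<exists>C::real. \<forall>f\<in>borel_measurable lebesgue. (\<integral>\<^sup>+x\<in>E. f x \<partial>lebesgue) \<le> ennreal C * \<rho> f"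
  using \<rho> unfolding ri_norm_def by blast

lemma ri_norm_finite_imp_AE_finite:
  assumes E: "E \<in> sets lebesgue" "emeasure lebesgue E < \<infinity>"
    and f: "f \<in> borel_measurable lebesgue" "\<rho> f < \<infinity>"
  shows "AE x in lebesgue. x \<in> E \<longrightarrow> f x < \<infinity>"
proof -
  obtain K :: real where "(\<integral>\<^sup>+x\<in>E. f x \<partial>lebesgue) \<le> ennreal K * \<rho> f"
    using ri_norm_bounds_set_nn_integral[OF E] f(1) by blast
  also have "\<dots> < \<infinity>"
    using f(2) by (simp add: ennreal_mult_less_top)
  finally have "AE x in lebesgue. f x * indicator E x \<noteq> \<infinity>"
    using E(1) f(1) by (intro nn_integral_PInf_AE) auto
  then show ?thesis
  proof (rule eventually_mono, intro impI)
    fix x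
    assume "f x * indicator E x \<noteq> \<infinity>" and "x \<in> E"
    then show "f x < \<infinity>"
      by (simp add: less_top)
  qed
qed

lemma ri_norm_equimeasurable:
  "f \<in> borel_measurable lebesgue \<Longrightarrow> g \<in> borel_measurable lebesgue \<Longrightarrow>
    equimeasurable f g \<Longrightarrow> \<rho> f = \<rho> g"
  using \<rho> unfolding ri_norm_def by blast

lemma ri_norm_lebesgue_preserving:
  assumes T: "lebesgue_preserving T" and h: "h \<in> borel_measurable lebesgue"
  shows "\<rho> (\<lambda>x. h (T x)) = \<rho> h"
proof -
  have "emeasure lebesgue {x. t < h (T x)} = emeasure lebesgue {x. t < h x}" for t
  proof -
    have "{x. t < h x} \<in> sets lebesgue"
      using measurable_sets[OF h, of "{t<..}"] by (simp add: vimage_def)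
    from emeasure_vimage_lebesgue_preserving[OF T this]
    show ?thesis
      by (simp only: vimage_Collect_eq)
  qed
  then show ?thesis
    using measurable_comp_lebesgue_preserving[OF T h] h
    by (intro ri_norm_equimeasurable) (auto simp: equimeasurable_def)
qed

lemma ri_norm_sum_le:
  "finite I \<Longrightarrow> (\<And>i. i \<in> I \<Longrightarrow> f i \<in> borel_measurable lebesgue) \<Longrightarrow>
    \<rho> (\<lambda>x. \<Sum>i\<in>I. f i x) \<le> (\<Sum>i\<in>I. \<rho> (f i))"
proof (induction I rule: finite_induct)
  case (insert i I)
  then have "\<rho> (\<lambda>x. f i x + (\<Sum>j\<in>I. f j x)) \<le> \<rho> (f i) + \<rho> (\<lambda>x. \<Sum>j\<in>I. f j x)"
    by (intro ri_norm_add) auto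
  with insert show ?case
    by (simp add: add_mono order_trans)
qed (simp add: ri_norm_zero)

lemma ri_norm_average_le:
  fixes f :: "nat \<Rightarrow> 'a \<Rightarrow> real"
  assumes f: "\<And>i. f i \<in> borel_measurable lebesgue" "\<And>i x. 0 \<le> f i x"
    and bound: "\<And>i. i < N \<Longrightarrow> \<rho> (\<lambda>x. ennreal (f i x)) \<le> B"
  shows "\<rho> (\<lambda>x. ennreal ((\<Sum>i<N. f i x) / real N)) \<le> B"
proof (cases "N = 0")
  case False
  have "ennreal ((\<Sum>i<N. f i x) / real N) = ennreal (1 / real N) * (\<Sum>i<N. ennreal (f i x))" for x
    using f(2) by (simp add: ennreal_mult'[symmetric] sum_nonneg sum_ennreal)
  then have "\<rho> (\<lambda>x. ennreal ((\<Sum>i<N. f i x) / real N))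
      = ennreal (1 / real N) * \<rho> (\<lambda>x. \<Sum>i<N. ennreal (f i x))"
    using f(1) by (simp add: ri_norm_cmult)
  also have "\<dots> \<le> ennreal (1 / real N) * (\<Sum>i<N. \<rho> (\<lambda>x. ennreal (f i x)))"
    using f(1) by (intro mult_left_mono ri_norm_sum_le) auto
  also have "\<dots> \<le> ennreal (1 / real N) * (of_nat N * B)"
    using bound sum_mono[of "{..<N}" "\<lambda>i. \<rho> (\<lambda>x. ennreal (f i x))" "\<lambda>_. B"]
    by (intro mult_left_mono) auto
  also have "\<dots> = B"
    using False by (simp add: ennreal_of_nat_eq_real_of_nat mult.assoc[symmetric]
        ennreal_mult'[symmetric])
  finally show ?thesis .
qed (simp add: ri_norm_zero)

lemma ri_norm_liminf_le:
  assumes F: "\<And>k. F k \<in> borel_measurable lebesgue" and f: "f \<in> borel_measurable lebesgue"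
    and bound: "\<And>k. \<rho> (F k) \<le> B"
    and le: "AE x in lebesgue. f x \<le> liminf (\<lambda>k. F k x)"
  shows "\<rho> f \<le> B"
proof -
  define G where "G k x = (INF j\<in>{k..}. F j x)" for k x
  have G: "G k \<in> borel_measurable lebesgue" for k
    unfolding G_def using F by measurable
  have SUP_G: "(\<lambda>x. SUP k. G k x) \<in> borel_measurable lebesgue"
    using G by measurable
  have "\<rho> (\<lambda>x. SUP k. G k x) = (SUP k. \<rho> (G k))"
    using G SUP_G by (intro ri_norm_SUP) (auto simp: G_def intro!: monoI INF_superset_mono)
  also have "\<dots> \<le> B"
  proof (rule SUP_least)
    fix k
    have "\<rho> (G k) \<le> \<rho> (F k)"
      using F G by (intro ri_norm_mono) (auto simp: G_def intro: INF_lower)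
    then show "\<rho> (G k) \<le> B"
      using bound order_trans by blast
  qed
  finally have "\<rho> (\<lambda>x. SUP k. G k x) \<le> B" .
  moreover have "\<rho> f \<le> \<rho> (\<lambda>x. SUP k. G k x)"
    using le SUP_G f by (intro ri_norm_mono) (auto simp: liminf_SUP_INF G_def)
  ultimately show ?thesis
    by simp
qed

end

section \<open>Greedy empirical approximation of integrals\<close>

locale empirical_approximation = M: finite_measure M + P: prob_space P
  for M :: "'b measure" and P :: "'c measure" +
  fixes g :: "'b \<Rightarrow> 'c \<Rightarrow> real" and T :: real
  assumes measurable_g: "case_prod g \<in> borel_measurable (M \<Otimes>\<^sub>M P)"
    and g_nonneg: "\<And>x y. 0 \<le> g x y" and g_le: "\<And>x y. g x y \<le> T"
begin

definition mean :: "'b \<Rightarrow> real" where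
  "mean x = (\<integral>y. g x y \<partial>P)"

lemma measurable_g_right: "y \<in> space P \<Longrightarrow> (\<lambda>x. g x y) \<in> borel_measurable M"
  using measurable_compose[OF measurable_Pair2' measurable_g] by simp

lemma integrable_g_left: "x \<in> space M \<Longrightarrow> integrable P (g x)"
  using measurable_compose[OF measurable_Pair1' measurable_g] g_nonneg g_le
  by (intro P.integrable_const_bound[where B=T]) auto

lemma measurable_mean: "mean \<in> borel_measurable M"
  unfolding mean_def[abs_def] using measurable_g by (rule P.borel_measurable_lebesgue_integral)

lemma T_nonneg: "0 \<le> T"
  using order_trans[OF g_nonneg g_le] .

lemma mean_nonneg: "0 \<le> mean x"
  unfolding mean_def using g_nonneg by (intro integral_nonneg_AE) auto

lemma mean_le: "mean x \<le> T"
proof (cases "integrable P (g x)")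
  case True
  then show ?thesis
    unfolding mean_def using g_le by (intro P.integral_le_const) auto
qed (simp add: mean_def not_integrable_integral_eq T_nonneg)

lemma deviation_bound: "\<bar>g x y - mean x\<bar> \<le> T"
  using g_nonneg[of x y] g_le[of x y] mean_nonneg[of x] mean_le[of x] by linarith

lemma integrable_bounded:
  fixes f :: "'b \<Rightarrow> real"
  shows "f \<in> borel_measurable M \<Longrightarrow> (\<And>x. \<bar>f x\<bar> \<le> B) \<Longrightarrow> integrable M f"
  by (rule M.integrable_const_bound[where B=B]) auto

lemma exists_nonpos_correlation:
  assumes a: "a \<in> borel_measurable M" "\<And>x. \<bar>a x\<bar> \<le> B"
  shows "\<exists>y\<in>space P. (\<integral>x. a x * (g x y - mean x) \<partial>M) \<le> 0"
proof (rule ccontr)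
  interpret MP: pair_sigma_finite M P ..
  define F where "F x y = a x * (g x y - mean x)" for x y
  assume "\<not> ?thesis"
  then have pos: "AE y in P. 0 < (\<integral>x. F x y \<partial>M)"
    by (auto simp: F_def not_le)
  have F: "integrable (M \<Otimes>\<^sub>M P) (case_prod F)"
  proof (rule finite_measure.integrable_const_bound[where B="B * T"])
    show "finite_measure (M \<Otimes>\<^sub>M P)"
      by (intro finite_measure_pair_measure) unfold_locales
    show "AE p in M \<Otimes>\<^sub>M P. norm (case_prod F p) \<le> B * T"
      using a(2) deviation_bound order_trans[OF abs_ge_zero a(2)]
      by (intro AE_I2) (auto simp: F_def abs_mult case_prod_beta intro!: mult_mono)
    show "case_prod F \<in> borel_measurable (M \<Otimes>\<^sub>M P)"
      unfolding F_def using a(1) measurable_g measurable_mean by measurable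
  qed
  have "(\<integral>y. F x y \<partial>P) = 0" if "x \<in> space M" for x
    using integrable_g_left[OF that] by (simp add: F_def mean_def P.prob_space)
  then have "(\<integral>y. (\<integral>x. F x y \<partial>M) \<partial>P) = 0"
    by (simp add: MP.Fubini_integral[OF F] cong: Bochner_Integration.integral_cong)
  then have "AE y in P. (\<integral>x. F x y \<partial>M) = 0"
    using pos MP.integrable_snd[OF F] by (subst (asm) integral_nonneg_eq_0_iff_AE) auto
  with pos have "AE y in P. False"
    by eventually_elim simp
  then show False
    by (simp add: P.AE_False)
qed

lemma exists_greedy_sequence:
  obtains Y :: "nat \<Rightarrow> 'c" where "\<And>i. Y i \<in> space P"
    and "\<And>k. (\<integral>x. (\<Sum>i<k. g x (Y i) - mean x) * (g x (Y k) - mean x) \<partial>M) \<le> 0"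
proof -
  have "\<exists>S. \<forall>n. (S n \<in> borel_measurable M \<and> (\<forall>x. \<bar>S n x\<bar> \<le> real n * T)) \<and>
      (\<exists>y\<in>space P. S (Suc n) = (\<lambda>x. S n x + (g x y - mean x)) \<and>
        (\<integral>x. S n x * (g x y - mean x) \<partial>M) \<le> 0)"
  proof (rule dependent_nat_choice)
    fix a n assume a: "a \<in> borel_measurable M \<and> (\<forall>x. \<bar>a x\<bar> \<le> real n * T)"
    then obtain y where y: "y \<in> space P" "(\<integral>x. a x * (g x y - mean x) \<partial>M) \<le> 0"
      using exists_nonpos_correlation by blast
    have "\<bar>a x + (g x y - mean x)\<bar> \<le> real (Suc n) * T" for x
    proof -
      have "\<bar>a x\<bar> \<le> real n * T"
        using a by blast
      then show ?thesis
        using abs_triangle_ineq[of "a x" "g x y - mean x"] deviation_bound[of x y]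
        by (simp add: algebra_simps)
    qed
    moreover have "(\<lambda>x. a x + (g x y - mean x)) \<in> borel_measurable M"
      using a measurable_g_right[OF y(1)] measurable_mean by (intro borel_measurable_add) auto
    ultimately show "\<exists>a'. (a' \<in> borel_measurable M \<and> (\<forall>x. \<bar>a' x\<bar> \<le> real (Suc n) * T)) \<and>
        (\<exists>y\<in>space P. a' = (\<lambda>x. a x + (g x y - mean x)) \<and> (\<integral>x. a x * (g x y - mean x) \<partial>M) \<le> 0)"
      using y by blast
  qed (auto intro: exI[of _ "\<lambda>x. 0"])
  then obtain S where S: "\<And>n x. \<bar>S n x\<bar> \<le> real n * T"
    and "\<forall>n. \<exists>y\<in>space P. S (Suc n) = (\<lambda>x. S n x + (g x y - mean x)) \<and>
        (\<integral>x. S n x * (g x y - mean x) \<partial>M) \<le> 0"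
    by blast
  then obtain Y where Y: "\<And>n. Y n \<in> space P"
    and S_Suc: "\<And>n. S (Suc n) = (\<lambda>x. S n x + (g x (Y n) - mean x))"
    and greedy: "\<And>n. (\<integral>x. S n x * (g x (Y n) - mean x) \<partial>M) \<le> 0"
    by metis
  have "S n = (\<lambda>x. \<Sum>i<n. g x (Y i) - mean x)" for n
  proof (induction n)
    case 0
    show ?case
      using S[of 0] by auto
  qed (simp add: S_Suc)
  then have "(\<integral>x. (\<Sum>i<k. g x (Y i) - mean x) * (g x (Y k) - mean x) \<partial>M) \<le> 0" for k
    using greedy[of k] by simp
  then show thesis
    by (intro that[of Y] Y)
qed

lemma greedy_partial_sum_L2_bound:
  assumes Y: "\<And>i. Y i \<in> space P"
    and greedy: "\<And>k. (\<integral>x. (\<Sum>i<k. g x (Y i) - mean x) * (g x (Y k) - mean x) \<partial>M) \<le> 0"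
  shows "(\<integral>x. (\<Sum>i<k. g x (Y i) - mean x)\<^sup>2 \<partial>M) \<le> real k * (T\<^sup>2 * measure M (space M))"
proof (induction k)
  case (Suc k)
  define a where "a x = (\<Sum>i<k. g x (Y i) - mean x)" for x
  define b where "b x = g x (Y k) - mean x" for x
  have a_bound: "\<bar>a x\<bar> \<le> real k * T" for x
  proof -
    have "\<bar>a x\<bar> \<le> (\<Sum>i<k. \<bar>g x (Y i) - mean x\<bar>)"
      unfolding a_def by (rule sum_abs)
    also have "\<dots> \<le> (\<Sum>i<k. T)"
      by (intro sum_mono deviation_bound)
    finally show ?thesis
      by simp
  qed
  have a: "a \<in> borel_measurable M" "\<bar>a x\<bar> \<le> real k * T" for x
    using measurable_g_right[OF Y] measurable_mean a_bound unfolding a_def by auto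
  have b: "b \<in> borel_measurable M" "\<bar>b x\<bar> \<le> T" for x
    using measurable_g_right[OF Y] measurable_mean deviation_bound unfolding b_def by auto
  have a2: "(a x)\<^sup>2 \<le> (real k * T)\<^sup>2" and b2: "(b x)\<^sup>2 \<le> T\<^sup>2" for x
    using power_mono[OF a(2)[of x] abs_ge_zero, of 2] power_mono[OF b(2)[of x] abs_ge_zero, of 2] by simp_all
  have "(\<integral>x. (b x)\<^sup>2 \<partial>M) \<le> (\<integral>x. T\<^sup>2 \<partial>M)"
    using b b2 by (intro integral_mono integrable_bounded[of _ "T\<^sup>2"]) auto
  then have b2_integral: "(\<integral>x. (b x)\<^sup>2 \<partial>M) \<le> T\<^sup>2 * measure M (space M)"
    by (simp add: mult.commute)
  have "(\<Sum>i<Suc k. g x (Y i) - mean x)\<^sup>2 = (a x)\<^sup>2 + (b x)\<^sup>2 + 2 * (a x * b x)" for x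
    unfolding a_def b_def sum.lessThan_Suc power2_sum by (simp add: mult.assoc)
  moreover have "integrable M (\<lambda>x. (a x)\<^sup>2)" "integrable M (\<lambda>x. (b x)\<^sup>2)"
    using a b a2 b2 by (auto intro!: integrable_bounded)
  moreover have "integrable M (\<lambda>x. a x * b x)"
    using a b mult_mono[OF a(2) b(2) _ abs_ge_zero] T_nonneg
    by (intro integrable_bounded) (auto simp: abs_mult)
  ultimately have "(\<integral>x. (\<Sum>i<Suc k. g x (Y i) - mean x)\<^sup>2 \<partial>M)
      = (\<integral>x. (a x)\<^sup>2 \<partial>M) + (\<integral>x. (b x)\<^sup>2 \<partial>M) + 2 * (\<integral>x. a x * b x \<partial>M)"
    by simp
  also have "\<dots> \<le> real k * (T\<^sup>2 * measure M (space M)) + T\<^sup>2 * measure M (space M) + 2 * 0"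
    using Suc.IH greedy[of k] b2_integral by (intro add_mono) (auto simp: a_def b_def)
  finally show ?case
    by (simp add: algebra_simps)
qed simp

lemma greedy_average_L2_bound:
  assumes Y: "\<And>i. Y i \<in> space P"
    and greedy: "\<And>k. (\<integral>x. (\<Sum>i<k. g x (Y i) - mean x) * (g x (Y k) - mean x) \<partial>M) \<le> 0"
    and k: "0 < k"
  shows "(\<integral>x. ((\<Sum>i<k. g x (Y i)) / real k - mean x)\<^sup>2 \<partial>M) \<le> T\<^sup>2 * measure M (space M) / real k"
proof -
  have "((\<Sum>i<k. g x (Y i)) / real k - mean x)\<^sup>2 = (\<Sum>i<k. g x (Y i) - mean x)\<^sup>2 / (real k)\<^sup>2" for x
    using k by (simp add: sum_subtractf power_divide field_simps)
  then have "(\<integral>x. ((\<Sum>i<k. g x (Y i)) / real k - mean x)\<^sup>2 \<partial>M)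
      = (\<integral>x. (\<Sum>i<k. g x (Y i) - mean x)\<^sup>2 \<partial>M) / (real k)\<^sup>2"
    by simp
  also have "\<dots> \<le> real k * (T\<^sup>2 * measure M (space M)) / (real k)\<^sup>2"
    by (intro divide_right_mono greedy_partial_sum_L2_bound[OF Y greedy]) simp
  finally show ?thesis
    using k by (simp add: power2_eq_square)
qed

theorem averages_tendsto_mean_AE:
  obtains Y :: "nat \<Rightarrow> 'c" and r :: "nat \<Rightarrow> nat"
  where "\<And>i. Y i \<in> space P" "strict_mono r"
    "AE x in M. (\<lambda>k. (\<Sum>i<r k. g x (Y i)) / real (r k)) \<longlonglongrightarrow> mean x"
proof -
  obtain Y :: "nat \<Rightarrow> 'c" where Y: "\<And>i. Y i \<in> space P"
    and greedy: "\<And>k. (\<integral>x. (\<Sum>i<k. g x (Y i) - mean x) * (g x (Y k) - mean x) \<partial>M) \<le> 0"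
    using exists_greedy_sequence by blast
  define u where "u k x = ((\<Sum>i<k. g x (Y i)) / real k - mean x)\<^sup>2" for k x
  have u_integrable: "integrable M (u k)" for k
  proof (rule integrable_bounded)
    show "u k \<in> borel_measurable M"
      unfolding u_def using measurable_g_right[OF Y] measurable_mean by measurable
    fix x
    have "0 \<le> (\<Sum>i<k. g x (Y i)) / real k" "(\<Sum>i<k. g x (Y i)) / real k \<le> T"
      using sum_mono[of "{..<k}" "\<lambda>i. g x (Y i)" "\<lambda>_. T"] g_le g_nonneg T_nonneg
      by (auto simp: sum_nonneg field_split_simps)
    then have "\<bar>(\<Sum>i<k. g x (Y i)) / real k - mean x\<bar> \<le> T"
      using mean_nonneg[of x] mean_le[of x] by linarith
    from power_mono[OF this abs_ge_zero, of 2] show "\<bar>u k x\<bar> \<le> T\<^sup>2"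
      by (simp add: u_def)
  qed
  have "(\<lambda>k. \<integral>x. norm (u k x) \<partial>M) \<longlonglongrightarrow> 0"
  proof (rule tendsto_sandwich[where f="\<lambda>_. 0"])
    show "(\<lambda>k. T\<^sup>2 * measure M (space M) / real k) \<longlonglongrightarrow> 0"
      by (intro tendsto_divide_0[OF tendsto_const] filterlim_at_top_imp_at_infinity
          filterlim_real_sequentially)
    show "\<forall>\<^sub>F k in sequentially. (\<integral>x. norm (u k x) \<partial>M) \<le> T\<^sup>2 * measure M (space M) / real k"
      using eventually_gt_at_top[of 0]
      by eventually_elim (simp add: u_def greedy_average_L2_bound[OF Y greedy])
  qed auto
  then obtain r where r: "strict_mono r" "AE x in M. (\<lambda>k. u (r k) x) \<longlonglongrightarrow> 0"
    using tendsto_L1_AE_subseq[where u=u and M=M] u_integrable by blast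
  from r(2) have "AE x in M. (\<lambda>k. (\<Sum>i<r k. g x (Y i)) / real (r k)) \<longlonglongrightarrow> mean x"
    by eventually_elim (simp add: u_def LIM_zero_iff)
  with Y r(1) show thesis
    by (rule that)
qed

end

section \<open>A Minkowski inequality for rearrangement invariant norms\<close>

lemma averages_tendsto_integral_AE_on:
  fixes g :: "'a::euclidean_space \<Rightarrow> 'c \<Rightarrow> real"
  assumes P: "prob_space P" and g: "case_prod g \<in> borel_measurable (borel \<Otimes>\<^sub>M P)"
    "\<And>x y. 0 \<le> g x y" "\<And>x y. g x y \<le> c"
    and S: "S \<in> sets borel" "emeasure lborel S < \<infinity>"
  obtains Y :: "nat \<Rightarrow> 'c" and r :: "nat \<Rightarrow> nat" where "\<And>i. Y i \<in> space P"
    "AE x in lborel. x \<in> S \<longrightarrow> (\<lambda>k. (\<Sum>i<r k. g x (Y i)) / real (r k)) \<longlonglongrightarrow> (\<integral>y. g x y \<partial>P)"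
proof -
  define M where "M = density lborel (indicator S)"
  have sets_MP: "sets (M \<Otimes>\<^sub>M P) = sets (borel \<Otimes>\<^sub>M P)"
    unfolding M_def by (intro sets_pair_measure_cong) auto
  interpret empirical_approximation M P g c
  proof (intro empirical_approximation.intro empirical_approximation_axioms.intro P finite_measureI)
    show "emeasure M (space M) \<noteq> \<infinity>"
      using S by (simp add: M_def emeasure_restricted less_top[symmetric])
    show "case_prod g \<in> borel_measurable (M \<Otimes>\<^sub>M P)"
      unfolding measurable_cong_sets[OF sets_MP refl] by (rule g(1))
  qed (use g(2,3) in auto)
  show thesis
  proof (rule averages_tendsto_mean_AE)
    fix Y r
    assume Y: "\<And>i. Y i \<in> space P"
      and "AE x in M. (\<lambda>k. (\<Sum>i<r k. g x (Y i)) / real (r k)) \<longlonglongrightarrow> mean x"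
    then have "AE x in lborel. x \<in> S \<longrightarrow> (\<lambda>k. (\<Sum>i<r k. g x (Y i)) / real (r k)) \<longlonglongrightarrow> mean x"
      unfolding M_def using borel_measurable_indicator[OF S(1)] by (subst (asm) AE_density) auto
    with Y show thesis
      unfolding mean_def by (rule that)
  qed
qed

lemma indicator_nn_integral_le_liminf:
  fixes f :: "'c \<Rightarrow> real"
  assumes P: "prob_space P" and f: "f \<in> borel_measurable P" "\<And>y. 0 \<le> f y" "\<And>y. f y \<le> c"
    and lim: "x \<in> S \<longrightarrow> a \<longlonglongrightarrow> (\<integral>y. f y \<partial>P)"
  shows "indicator S x * (\<integral>\<^sup>+y. ennreal (f y) \<partial>P) \<le> liminf (\<lambda>k. ennreal (a k))"
proof -
  interpret P: prob_space P
    by (rule P)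
  have "(\<integral>\<^sup>+y. ennreal (f y) \<partial>P) = ennreal (\<integral>y. f y \<partial>P)"
    using f by (intro nn_integral_eq_integral P.integrable_const_bound[where B=c]) auto
  moreover have "liminf (\<lambda>k. ennreal (a k)) = ennreal (\<integral>y. f y \<partial>P)" if "x \<in> S"
    using lim that by (intro lim_imp_Liminf tendsto_ennrealI) auto
  ultimately show ?thesis
    by (cases "x \<in> S") simp_all
qed

lemma ri_norm_bounded_integral_le:
  fixes \<rho> :: "('a::euclidean_space \<Rightarrow> ennreal) \<Rightarrow> ennreal" and g :: "'a \<Rightarrow> 'c \<Rightarrow> real"
  assumes \<rho>: "ri_norm \<rho>" and P: "prob_space P"
    and g: "case_prod g \<in> borel_measurable (borel \<Otimes>\<^sub>M P)" "\<And>x y. 0 \<le> g x y" "\<And>x y. g x y \<le> c"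
    and bound: "\<And>y. y \<in> space P \<Longrightarrow> \<rho> (\<lambda>x. ennreal (g x y)) \<le> B"
    and S: "S \<in> sets borel" "emeasure lborel S < \<infinity>"
  shows "\<rho> (\<lambda>x. indicator S x * (\<integral>\<^sup>+y. ennreal (g x y) \<partial>P)) \<le> B"
proof -
  interpret P: prob_space P
    by (rule P)
  have [measurable]: "(\<lambda>p. g (fst p) (snd p)) \<in> borel_measurable (borel \<Otimes>\<^sub>M P)"
    using g(1) by (simp add: case_prod_beta')
  note S(1)[measurable]
  have g_section: "(\<lambda>x. g x y) \<in> borel_measurable lebesgue" if "y \<in> space P" for y
    using measurable_compose[OF measurable_Pair2'[OF that] g(1)]
    by (simp add: borel_measurable_lebesgue_if_borel)
  obtain Y r where Y: "\<And>i. Y i \<in> space P" and lim: "AE x in lborel. x \<in> S \<longrightarrow>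
      (\<lambda>k. (\<Sum>i<r k. g x (Y i)) / real (r k)) \<longlonglongrightarrow> (\<integral>y. g x y \<partial>P)"
    by (rule averages_tendsto_integral_AE_on[OF P g S]) (auto intro: that)
  show ?thesis
  proof (rule ri_norm_liminf_le[OF \<rho>])
    show "(\<lambda>x. ennreal ((\<Sum>i<r k. g x (Y i)) / real (r k))) \<in> borel_measurable lebesgue" for k
      using g_section[OF Y] by measurable
    show "\<rho> (\<lambda>x. ennreal ((\<Sum>i<r k. g x (Y i)) / real (r k))) \<le> B" for k
      using g(2) g_section[OF Y] bound[OF Y] by (intro ri_norm_average_le[OF \<rho>])
    have "(\<lambda>x. \<integral>\<^sup>+y. ennreal (g x y) \<partial>P) \<in> borel_measurable borel"
      by (intro P.borel_measurable_nn_integral) measurable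
    then show "(\<lambda>x. indicator S x * (\<integral>\<^sup>+y. ennreal (g x y) \<partial>P)) \<in> borel_measurable lebesgue"
      by (intro borel_measurable_lebesgue_if_borel) measurable
    show "AE x in lebesgue. indicator S x * (\<integral>\<^sup>+y. ennreal (g x y) \<partial>P)
        \<le> liminf (\<lambda>k. ennreal ((\<Sum>i<r k. g x (Y i)) / real (r k)))"
      using AE_completion[OF lim]
      by (rule eventually_mono) (intro indicator_nn_integral_le_liminf[OF P _ g(2,3)]
          measurable_compose[OF measurable_Pair1' g(1), simplified])
  qed
qed

lemma nn_integral_eq_SUP_truncations:
  fixes x :: "'a::real_normed_vector"
  assumes "f \<in> borel_measurable M" "\<And>y. 0 \<le> f y"
  defines "F n \<equiv> indicator (ball 0 (real n)) x * (\<integral>\<^sup>+y. ennreal (min (f y) (real n)) \<partial>M)"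
  shows "incseq F" and "(\<integral>\<^sup>+y. ennreal (f y) \<partial>M) = (SUP n. F n)"
proof -
  define I where "I n = (\<integral>\<^sup>+y. ennreal (min (f y) (real n)) \<partial>M)" for n :: nat
  have I_mono: "I m \<le> I n" if "m \<le> n" for m n
    unfolding I_def using that by (intro nn_integral_mono ennreal_leI) auto
  then show "incseq F"
    unfolding F_def I_def[symmetric] by (intro monoI mult_mono) (auto split: split_indicator)
  have "(SUP n::nat. ennreal (min (f y) (real n))) = ennreal (f y)" for y
  proof (rule antisym)
    obtain n :: nat where "f y \<le> real n"
      using real_arch_simple by blast
    then show "ennreal (f y) \<le> (SUP n::nat. ennreal (min (f y) (real n)))"
      by (intro SUP_upper2[of n]) auto
  qed (auto intro!: SUP_least ennreal_leI)
  moreover have "incseq (\<lambda>n::nat. \<lambda>y. ennreal (min (f y) (real n)))"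
    by (intro monoI le_funI ennreal_leI) auto
  ultimately have "(\<integral>\<^sup>+y. ennreal (f y) \<partial>M) = (SUP n. I n)"
    using assms(1) by (simp add: I_def nn_integral_monotone_convergence_SUP[symmetric])
  also have "\<dots> = (SUP n. F n)"
  proof (rule antisym)
    obtain n0 :: nat where "norm x < real n0"
      using reals_Archimedean2 by blast
    then have "I n \<le> F (max n n0)" for n
      using I_mono[of n "max n n0"] by (simp add: F_def I_def)
    then show "(SUP n. I n) \<le> (SUP n. F n)"
      by (intro SUP_least SUP_upper2) auto
    show "(SUP n. F n) \<le> (SUP n. I n)"
      unfolding F_def I_def by (intro SUP_mono) (auto split: split_indicator)
  qed
  finally show "(\<integral>\<^sup>+y. ennreal (f y) \<partial>M) = (SUP n. F n)" .
qed

lemma ri_norm_nn_integral_eq_SUP_truncations: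
  fixes \<rho> :: "('a::euclidean_space \<Rightarrow> ennreal) \<Rightarrow> ennreal" and h :: "'a \<Rightarrow> 'c \<Rightarrow> real"
  assumes \<rho>: "ri_norm \<rho>" and P: "prob_space P"
    and h: "case_prod h \<in> borel_measurable (borel \<Otimes>\<^sub>M P)" "\<And>x y. 0 \<le> h x y"
  shows "\<rho> (\<lambda>x. \<integral>\<^sup>+y. ennreal (h x y) \<partial>P)
    = (SUP n. \<rho> (\<lambda>x. indicator (ball 0 (real n)) x * (\<integral>\<^sup>+y. ennreal (min (h x y) (real n)) \<partial>P)))"
proof (rule ri_norm_SUP[OF \<rho>])
  interpret P: prob_space P
    by (rule P)
  have [measurable]: "(\<lambda>p. h (fst p) (snd p)) \<in> borel_measurable (borel \<Otimes>\<^sub>M P)"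
    using h(1) by (simp add: case_prod_beta')
  have [measurable]: "ball 0 r \<in> sets (borel :: 'a measure)" for r
    by simp
  show "(\<lambda>x. indicator (ball 0 (real n)) x * (\<integral>\<^sup>+y. ennreal (min (h x y) (real n)) \<partial>P))
      \<in> borel_measurable lebesgue" for n
    by (intro borel_measurable_lebesgue_if_borel borel_measurable_times_ennreal
        P.borel_measurable_nn_integral) measurable
  show "(\<lambda>x. \<integral>\<^sup>+y. ennreal (h x y) \<partial>P) \<in> borel_measurable lebesgue"
    by (intro borel_measurable_lebesgue_if_borel P.borel_measurable_nn_integral) measurable
  show "AE x in lebesgue.
      incseq (\<lambda>n. indicator (ball 0 (real n)) x * (\<integral>\<^sup>+y. ennreal (min (h x y) (real n)) \<partial>P)) \<and>
      (\<integral>\<^sup>+y. ennreal (h x y) \<partial>P)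
        = (SUP n. indicator (ball 0 (real n)) x * (\<integral>\<^sup>+y. ennreal (min (h x y) (real n)) \<partial>P))"
  proof (intro AE_I2 conjI)
    fix x :: 'a
    have "(\<lambda>y. h x y) \<in> borel_measurable P"
      using measurable_compose[OF measurable_Pair1' h(1)] by simp
    from nn_integral_eq_SUP_truncations[OF this h(2), where x=x]
    show "incseq (\<lambda>n. indicator (ball 0 (real n)) x * (\<integral>\<^sup>+y. ennreal (min (h x y) (real n)) \<partial>P))"
      "(\<integral>\<^sup>+y. ennreal (h x y) \<partial>P)
        = (SUP n. indicator (ball 0 (real n)) x * (\<integral>\<^sup>+y. ennreal (min (h x y) (real n)) \<partial>P))"
      by simp_all
  qed
qed

lemma ri_norm_nn_integral_le:
  fixes \<rho> :: "('a::euclidean_space \<Rightarrow> ennreal) \<Rightarrow> ennreal" and h :: "'a \<Rightarrow> 'c \<Rightarrow> real"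
  assumes \<rho>: "ri_norm \<rho>" and P: "prob_space P"
    and h: "case_prod h \<in> borel_measurable (borel \<Otimes>\<^sub>M P)" "\<And>x y. 0 \<le> h x y"
    and bound: "\<And>y. y \<in> space P \<Longrightarrow> \<rho> (\<lambda>x. ennreal (h x y)) \<le> B"
  shows "\<rho> (\<lambda>x. \<integral>\<^sup>+y. ennreal (h x y) \<partial>P) \<le> B"
proof -
  have [measurable]: "(\<lambda>p. h (fst p) (snd p)) \<in> borel_measurable (borel \<Otimes>\<^sub>M P)"
    using h(1) by (simp add: case_prod_beta')
  have truncated_bound: "\<rho> (\<lambda>x. ennreal (min (h x y) (real n))) \<le> B" if "y \<in> space P" for y n
  proof -
    have "(\<lambda>x. h x y) \<in> borel_measurable lebesgue"
      using measurable_compose[OF measurable_Pair2'[OF that] h(1)]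
      by (simp add: borel_measurable_lebesgue_if_borel)
    then have "\<rho> (\<lambda>x. ennreal (min (h x y) (real n))) \<le> \<rho> (\<lambda>x. ennreal (h x y))"
      by (intro ri_norm_mono[OF \<rho>] AE_I2 ennreal_leI) auto
    then show ?thesis
      using bound[OF that] by (rule order_trans)
  qed
  have "\<rho> (\<lambda>x. \<integral>\<^sup>+y. ennreal (h x y) \<partial>P)
    = (SUP n. \<rho> (\<lambda>x. indicator (ball 0 (real n)) x * (\<integral>\<^sup>+y. ennreal (min (h x y) (real n)) \<partial>P)))"
    by (rule ri_norm_nn_integral_eq_SUP_truncations[OF \<rho> P h])
  also have "\<dots> \<le> B"
  proof (rule SUP_least)
    fix n :: nat
    show "\<rho> (\<lambda>x. indicator (ball 0 (real n)) x * (\<integral>\<^sup>+y. ennreal (min (h x y) (real n)) \<partial>P)) \<le> B"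
      by (rule ri_norm_bounded_integral_le[OF \<rho> P _ _ _ truncated_bound, where c="real n"])
        (use h(2) emeasure_lborel_ball_finite[of 0 "real n"] in \<open>measurable, auto\<close>)
  qed
  finally show ?thesis .
qed

section \<open>Convolution\<close>

lemma nonneg_borel_representative:
  fixes v :: "'a::euclidean_space \<Rightarrow> real"
  assumes "v \<in> borel_measurable lebesgue" "\<And>x. 0 \<le> v x"
  obtains v' where "v' \<in> borel_measurable borel" "\<And>x. 0 \<le> v' x" "AE x in lebesgue. v x = v' x"
proof -
  obtain w where w: "w \<in> borel_measurable lborel" "AE x in lborel. v x = w x"
    using completion_ex_borel_measurable_real[OF assms(1)] by blast
  have "AE x in lebesgue. v x = max 0 (w x)"
    using AE_completion[OF w(2)] by eventually_elim (metis assms(2) max.absorb2)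
  moreover have "(\<lambda>x. max 0 (w x)) \<in> borel_measurable borel"
    using w(1) by measurable
  ultimately show thesis
    by (intro that) auto
qed

lemma conv_eq_nn_integral_lborel:
  fixes v \<alpha> :: "'a::euclidean_space \<Rightarrow> real"
  assumes "AE x in lebesgue. v x = v' x" "AE x in lebesgue. \<alpha> x = \<alpha>' x"
    and [measurable]: "v' \<in> borel_measurable borel" "\<alpha>' \<in> borel_measurable borel"
  shows "conv v \<alpha> x = (\<integral>\<^sup>+y. ennreal (v' (x - y) * \<alpha>' y) \<partial>lborel)"
proof -
  have "AE y in lebesgue. v (x - y) = v' (x - y)"
    using AE_lebesgue_preserving[OF lebesgue_preserving_diff assms(1)] .
  with assms(2) have "conv v \<alpha> x = (\<integral>\<^sup>+y. ennreal (v' (x - y) * \<alpha>' y) \<partial>lebesgue)"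
    unfolding conv_def by (intro nn_integral_cong_AE) (auto elim: eventually_elim2)
  then show ?thesis
    by (simp add: nn_integral_completion)
qed

lemma measurable_conv:
  fixes v \<alpha> :: "'a::euclidean_space \<Rightarrow> real"
  assumes "v \<in> borel_measurable lebesgue" "\<And>x. 0 \<le> v x"
    and "\<alpha> \<in> borel_measurable lebesgue" "\<And>x. 0 \<le> \<alpha> x"
  shows "conv v \<alpha> \<in> borel_measurable lebesgue"
proof -
  obtain v' \<alpha>' where v': "v' \<in> borel_measurable borel" "AE x in lebesgue. v x = v' x"
    and \<alpha>': "\<alpha>' \<in> borel_measurable borel" "AE x in lebesgue. \<alpha> x = \<alpha>' x"
    using nonneg_borel_representative assms by metis
  note [measurable] = v'(1) \<alpha>'(1)
  have "(\<lambda>x. \<integral>\<^sup>+y. ennreal (v' (x - y) * \<alpha>' y) \<partial>lborel) \<in> borel_measurable lborel"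
    by (intro lborel.borel_measurable_nn_integral) measurable
  moreover have "conv v \<alpha> = (\<lambda>x. \<integral>\<^sup>+y. ennreal (v' (x - y) * \<alpha>' y) \<partial>lborel)"
    using conv_eq_nn_integral_lborel[OF v'(2) \<alpha>'(2) v'(1) \<alpha>'(1)] by blast
  ultimately show ?thesis
    by (simp add: measurable_completion)
qed

lemma conv_pos:
  fixes v \<alpha> :: "'a::euclidean_space \<Rightarrow> real"
  assumes v: "v \<in> borel_measurable lebesgue" "\<And>x. 0 \<le> v x" "\<not> (AE x in lebesgue. v x = 0)"
    and \<alpha>: "\<alpha> \<in> borel_measurable lebesgue" "\<And>x. 0 < \<alpha> x"
  shows "0 < conv v \<alpha> x"
proof (rule ccontr)
  have "(\<lambda>y. ennreal (v (x - y) * \<alpha> y)) \<in> borel_measurable lebesgue"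
    using measurable_comp_lebesgue_preserving[OF lebesgue_preserving_diff v(1)] \<alpha>(1) by measurable
  moreover assume "\<not> 0 < conv v \<alpha> x"
  ultimately have "AE y in lebesgue. ennreal (v (x - y) * \<alpha> y) = 0"
    by (simp add: conv_def nn_integral_0_iff_AE)
  moreover have "v (x - y) = 0" if "ennreal (v (x - y) * \<alpha> y) = 0" for y
  proof -
    have "v (x - y) * \<alpha> y \<le> 0"
      using that by (simp add: ennreal_eq_0_iff)
    then show ?thesis
      using v(2)[of "x - y"] \<alpha>(2)[of y] by (simp add: mult_le_0_iff)
  qed
  ultimately have "AE y in lebesgue. v (x - y) = 0"
    by (auto elim: eventually_mono)
  from AE_lebesgue_preserving[OF lebesgue_preserving_diff this, of x]
  show False
    using v(3) by simp
qed

lemma conv_mult_eq_nn_integral_density: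
  fixes v \<alpha> :: "'a::euclidean_space \<Rightarrow> real"
  assumes "AE x in lebesgue. v x = v' x" "AE x in lebesgue. \<alpha> x = \<alpha>' x"
    and [measurable]: "v' \<in> borel_measurable borel" "\<alpha>' \<in> borel_measurable borel"
    and "\<And>x. 0 \<le> v' x" "\<And>x. 0 \<le> \<alpha>' x" "0 \<le> c"
  shows "conv v \<alpha> x * ennreal c = (\<integral>\<^sup>+y. ennreal (v' (x - y) * c) \<partial>density lborel \<alpha>')"
proof -
  have "(\<integral>\<^sup>+y. ennreal (v' (x - y) * c) \<partial>density lborel \<alpha>')
      = (\<integral>\<^sup>+y. ennreal (v' (x - y) * \<alpha>' y) * ennreal c \<partial>lborel)"
    using assms(5-7)
    by (subst nn_integral_density) (auto simp: ennreal_mult'[symmetric] mult_ac intro!: nn_integral_cong)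
  then show ?thesis
    by (simp add: nn_integral_multc conv_eq_nn_integral_lborel[OF assms(1-4)])
qed

lemma ri_norm_conv_mult_le:
  fixes \<rho> :: "('a::euclidean_space \<Rightarrow> ennreal) \<Rightarrow> ennreal" and v \<alpha> F :: "'a \<Rightarrow> real"
  assumes \<rho>: "ri_norm \<rho>"
    and v: "v \<in> borel_measurable lebesgue" "\<And>x. 0 \<le> v x"
    and \<alpha>: "\<alpha> \<in> borel_measurable lebesgue" "\<And>x. 0 \<le> \<alpha> x" "(\<integral>\<^sup>+x. ennreal (\<alpha> x) \<partial>lebesgue) = 1"
    and F: "F \<in> borel_measurable borel" "\<And>x. 0 \<le> F x"
    and bound: "\<And>y. \<rho> (\<lambda>x. ennreal (v (x - y) * F x)) \<le> B"
  shows "\<rho> (\<lambda>x. conv v \<alpha> x * ennreal (F x)) \<le> B"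
proof -
  obtain v' where v': "v' \<in> borel_measurable borel" "\<And>x. 0 \<le> v' x" "AE x in lebesgue. v x = v' x"
    using nonneg_borel_representative v by metis
  obtain \<alpha>' where \<alpha>': "\<alpha>' \<in> borel_measurable borel" "\<And>x. 0 \<le> \<alpha>' x" "AE x in lebesgue. \<alpha> x = \<alpha>' x"
    using nonneg_borel_representative \<alpha>(1,2) by metis
  note [measurable] = v'(1) \<alpha>'(1) F(1) borel_measurable_lebesgue_if_borel[OF F(1)]
  define P where "P = density lborel (\<lambda>y. ennreal (\<alpha>' y))"
  have "emeasure P (space P) = (\<integral>\<^sup>+y. ennreal (\<alpha>' y) \<partial>lebesgue)"
    by (simp add: P_def emeasure_density nn_integral_completion)
  also have "\<dots> = (\<integral>\<^sup>+y. ennreal (\<alpha> y) \<partial>lebesgue)"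
    using \<alpha>'(3) by (intro nn_integral_cong_AE) (auto elim: eventually_mono)
  finally have P: "prob_space P"
    using \<alpha>(3) by (intro prob_spaceI) simp
  have sets_P: "sets (borel \<Otimes>\<^sub>M P) = sets (borel \<Otimes>\<^sub>M borel)"
    by (intro sets_pair_measure_cong) (auto simp: P_def)
  have "\<rho> (\<lambda>x. \<integral>\<^sup>+y. ennreal (v' (x - y) * F x) \<partial>P) \<le> B"
  proof (rule ri_norm_nn_integral_le[OF \<rho> P])
    show "(\<lambda>(x, y). v' (x - y) * F x) \<in> borel_measurable (borel \<Otimes>\<^sub>M P)"
      unfolding measurable_cong_sets[OF sets_P refl] by measurable
    have "\<rho> (\<lambda>x. ennreal (v' (x - y) * F x)) = \<rho> (\<lambda>x. ennreal (v (x - y) * F x))" for y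
      using AE_lebesgue_preserving[OF lebesgue_preserving_diff_right v'(3), of y]
        measurable_comp_lebesgue_preserving[OF lebesgue_preserving_diff_right v(1), of y]
      by (intro ri_norm_cong_AE[OF \<rho>]) (auto simp: borel_measurable_lebesgue_if_borel elim!: eventually_mono)
    then show "\<rho> (\<lambda>x. ennreal (v' (x - y) * F x)) \<le> B" for y
      using bound by simp
  qed (use v'(2) F(2) in auto)
  then show ?thesis
    unfolding P_def by (simp add: conv_mult_eq_nn_integral_density[OF v'(3) \<alpha>'(3) v'(1) \<alpha>'(1) v'(2) \<alpha>'(2) F(2)])
qed

section \<open>Fourier transform\<close>

lemma measurable_cis_inner[measurable]:
  "(\<lambda>t. cis (- (2 * pi * (y \<bullet> t)))) \<in> borel_measurable (borel :: 'a::euclidean_space measure)"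
  by (intro borel_measurable_continuous_onI continuous_intros)

lemma measurable_cis_inner_lebesgue[measurable]:
  "(\<lambda>t. cis (- (2 * pi * (y \<bullet> t)))) \<in> borel_measurable (lebesgue :: 'a::euclidean_space measure)"
  by (rule borel_measurable_lebesgue_if_borel) (rule measurable_cis_inner)

lemma fourier_modulation:
  "fourier (\<lambda>t. cis (- (2 * pi * (y \<bullet> t))) * f t) x = fourier f (x + y)"
  unfolding fourier_def
proof (intro Bochner_Integration.integral_cong refl)
  fix t
  have "cis (- (2 * pi * (x \<bullet> t))) * cis (- (2 * pi * (y \<bullet> t))) = cis (- (2 * pi * ((x + y) \<bullet> t)))"
    by (simp add: cis_mult inner_add_left algebra_simps)
  then show "cis (- (2 * pi * (x \<bullet> t))) * (cis (- (2 * pi * (y \<bullet> t))) * f t)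
      = cis (- (2 * pi * ((x + y) \<bullet> t))) * f t"
    by (simp add: mult.assoc[symmetric])
qed

lemma integrable_modulation:
  fixes f :: "'a::euclidean_space \<Rightarrow> complex"
  assumes "integrable lebesgue f"
  shows "integrable lebesgue (\<lambda>t. cis (- (2 * pi * (y \<bullet> t))) * f t)"
proof (rule Bochner_Integration.integrable_bound[OF assms])
  show "(\<lambda>t. cis (- (2 * pi * (y \<bullet> t))) * f t) \<in> borel_measurable lebesgue"
    using borel_measurable_integrable[OF assms] by measurable
qed (simp add: norm_mult)

lemma complex_borel_representative:
  fixes f :: "'a::euclidean_space \<Rightarrow> complex"
  assumes f: "f \<in> borel_measurable lebesgue"
  obtains f' where "f' \<in> borel_measurable borel" "AE x in lebesgue. f x = f' x"
proof -
  obtain r s where r: "r \<in> borel_measurable lborel" "AE x in lborel. Re (f x) = r x"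
    and s: "s \<in> borel_measurable lborel" "AE x in lborel. Im (f x) = s x"
    using completion_ex_borel_measurable_real[of "\<lambda>x. Re (f x)" lborel]
      completion_ex_borel_measurable_real[of "\<lambda>x. Im (f x)" lborel] f by auto
  have "(\<lambda>x. complex_of_real (r x) + \<i> * complex_of_real (s x)) \<in> borel_measurable borel"
    using r(1) s(1) by simp
  moreover have "AE x in lebesgue. f x = complex_of_real (r x) + \<i> * complex_of_real (s x)"
    using AE_completion[OF r(2)] AE_completion[OF s(2)] by eventually_elim (simp add: complex_eq_iff)
  ultimately show thesis
    by (rule that)
qed

lemma fourier_measurable:
  fixes f :: "'a::euclidean_space \<Rightarrow> complex"
  assumes "integrable lebesgue f"
  shows "fourier f \<in> borel_measurable borel"
proof -
  have f: "f \<in> borel_measurable lebesgue"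
    using assms by (rule borel_measurable_integrable)
  then obtain f' where f'[measurable]: "f' \<in> borel_measurable borel" and ae: "AE x in lebesgue. f x = f' x"
    by (rule complex_borel_representative)
  have "fourier f x = (\<integral>t. cis (- (2 * pi * (x \<bullet> t))) * f' t \<partial>lborel)" for x
  proof -
    have "fourier f x = (\<integral>t. cis (- (2 * pi * (x \<bullet> t))) * f' t \<partial>lebesgue)"
      unfolding fourier_def using f borel_measurable_lebesgue_if_borel[OF f'] ae
      by (intro integral_cong_AE) (auto elim: eventually_mono)
    also have "\<dots> = (\<integral>t. cis (- (2 * pi * (x \<bullet> t))) * f' t \<partial>lborel)"
      by (rule integral_completion) measurable
    finally show ?thesis .
  qed
  then have "fourier f = (\<lambda>x. \<integral>t. cis (- (2 * pi * (x \<bullet> t))) * f' t \<partial>lborel)"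
    by (rule ext)
  moreover have [measurable]:
    "(\<lambda>p. cis (- (2 * pi * (fst p \<bullet> snd p)))) \<in> borel_measurable (lborel \<Otimes>\<^sub>M lborel)"
    unfolding lborel_prod measurable_lborel2 by (intro borel_measurable_continuous_onI continuous_intros)
  have "(\<lambda>p. cis (- (2 * pi * (fst p \<bullet> snd p))) * f' (snd p)) \<in> borel_measurable (lborel \<Otimes>\<^sub>M lborel)"
    by measurable
  then have "(\<lambda>x. \<integral>t. cis (- (2 * pi * (x \<bullet> t))) * f' t \<partial>lborel) \<in> borel_measurable lborel"
    by (intro lborel.borel_measurable_lebesgue_integral) (simp add: case_prod_beta')
  ultimately show ?thesis
    by (simp only: measurable_lborel2)
qed

lemma cos_ge_half: "\<bar>s\<bar> \<le> pi / 4 \<Longrightarrow> 1 / 2 \<le> cos s"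
proof -
  assume s: "\<bar>s\<bar> \<le> pi / 4"
  have "sqrt 2 / 2 = cos (pi / 4)"
    by (simp add: cos_45)
  also have "\<dots> \<le> cos \<bar>s\<bar>"
    using s by (intro cos_monotone_0_pi_le) auto
  finally have "sqrt 2 / 2 \<le> cos s"
    by simp
  moreover have "1 \<le> sqrt 2"
    by simp
  ultimately show ?thesis
    by linarith
qed

lemma cmod_fourier_indicator_ge:
  fixes E :: "'a::euclidean_space set"
  assumes E: "E \<in> sets lebesgue" "emeasure lebesgue E < \<infinity>" "E \<subseteq> ball 0 r"
    and x: "norm x * r \<le> 1 / 8"
  shows "measure lebesgue E / 2 \<le> cmod (fourier (indicator E) x)"
proof -
  have E_integrable: "integrable lebesgue (indicator E :: 'a \<Rightarrow> real)"
    using E by (intro integrable_real_indicator) auto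
  have cos_bound: "1 / 2 * indicator E t \<le> cos (2 * pi * (x \<bullet> t)) * indicator E t" for t
  proof (cases "t \<in> E")
    case True
    then have "\<bar>x \<bullet> t\<bar> \<le> norm x * r"
      using E(3) Cauchy_Schwarz_ineq2[of x t] mult_left_mono[of "norm t" r "norm x"] by auto
    then have "\<bar>2 * pi * (x \<bullet> t)\<bar> \<le> pi / 4"
      using x by (simp add: abs_mult)
    then show ?thesis
      using True cos_ge_half by simp
  qed simp
  have "measure lebesgue E / 2 = (\<integral>t. 1 / 2 * indicator E t \<partial>lebesgue)"
    using E by simp
  also have "\<dots> \<le> (\<integral>t. cos (2 * pi * (x \<bullet> t)) * indicator E t \<partial>lebesgue)"
  proof (intro integral_mono cos_bound)
    have "(\<lambda>t. cos (2 * pi * (x \<bullet> t))) \<in> borel_measurable lebesgue"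
      by (intro borel_measurable_lebesgue_if_borel borel_measurable_continuous_onI continuous_intros)
    then show "integrable lebesgue (\<lambda>t. cos (2 * pi * (x \<bullet> t)) * indicator E t)"
      using E(1) by (intro Bochner_Integration.integrable_bound[OF E_integrable]) (auto split: split_indicator)
  qed (use E_integrable in simp)
  also have "\<dots> = Re (fourier (indicator E) x)"
    unfolding fourier_def using E
    by (subst integral_Re[symmetric])
      (auto intro!: integrableI_bounded_set[where A=E and B=1] Bochner_Integration.integral_cong
        simp: norm_mult split: split_indicator)
  also have "\<dots> \<le> cmod (fourier (indicator E) x)"
    by (rule complex_Re_le_cmod)
  finally show ?thesis .
qed

lemma fourier_indicator_nonzero:
  fixes E :: "'a::euclidean_space set"
  assumes E: "E \<in> sets lebesgue" "emeasure lebesgue E < \<infinity>" "emeasure lebesgue E \<noteq> 0" "E \<subseteq> ball 0 r"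
    and x: "norm x * r \<le> 1 / 8"
  shows "fourier (indicator E) x \<noteq> 0"
proof -
  have "0 < measure lebesgue E"
    using E(2,3) by (simp add: emeasure_eq_ennreal_measure measure_nonneg zero_less_measure_iff)
  then show ?thesis
    using cmod_fourier_indicator_ge[OF E(1,2,4) x] by auto
qed

section \<open>The weighted Fourier inequality\<close>

text \<open>The hypotheses of the theorem.\<close>

locale weighted_fourier_inequality =
  fixes \<rho>X \<rho>Y :: "('a::euclidean_space \<Rightarrow> ennreal) \<Rightarrow> ennreal"
    and u v :: "'a \<Rightarrow> real" and C :: real
  assumes ri_norm_X: "ri_norm \<rho>X" and ri_norm_Y: "ri_norm \<rho>Y"
    and u_measurable: "u \<in> borel_measurable lebesgue" and u_nonneg: "\<And>x. 0 \<le> u x"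
    and v_measurable: "v \<in> borel_measurable lebesgue" and v_nonneg: "\<And>x. 0 \<le> v x"
    and inequality: "\<And>f. integrable lebesgue f \<Longrightarrow> in_ri_space \<rho>X (\<lambda>x. complex_of_real (u x) * f x) \<Longrightarrow>
      ri_norm_of \<rho>Y (\<lambda>x. complex_of_real (v x) * fourier f x)
        \<le> ennreal C * ri_norm_of \<rho>X (\<lambda>x. complex_of_real (u x) * f x)"
begin

declare u_measurable [measurable] v_measurable [measurable]

abbreviation admissible :: "('a \<Rightarrow> complex) \<Rightarrow> bool" where
  "admissible f \<equiv> integrable lebesgue f \<and> in_ri_space \<rho>X (\<lambda>x. complex_of_real (u x) * f x)"

abbreviation weighted_norm :: "('a \<Rightarrow> complex) \<Rightarrow> ennreal" where
  "weighted_norm f \<equiv> ri_norm_of \<rho>X (\<lambda>x. complex_of_real (u x) * f x)"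

lemma admissible_modulation:
  assumes f: "admissible f"
  shows "admissible (\<lambda>t. cis (- (2 * pi * (y \<bullet> t))) * f t)"
    and "weighted_norm (\<lambda>t. cis (- (2 * pi * (y \<bullet> t))) * f t) = weighted_norm f"
proof -
  have "(\<lambda>x. complex_of_real (u x) * f x) \<in> borel_measurable lebesgue"
    using f by (simp add: in_ri_space_def)
  then have "(\<lambda>x. cis (- (2 * pi * (y \<bullet> x))) * (complex_of_real (u x) * f x)) \<in> borel_measurable lebesgue"
    by (rule borel_measurable_times[OF measurable_cis_inner_lebesgue])
  moreover have "cmod (complex_of_real (u x) * (cis (- (2 * pi * (y \<bullet> x))) * f x))
      = cmod (complex_of_real (u x) * f x)" for x
    by (simp add: norm_mult)
  ultimately show "admissible (\<lambda>t. cis (- (2 * pi * (y \<bullet> t))) * f t)"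
    and "weighted_norm (\<lambda>t. cis (- (2 * pi * (y \<bullet> t))) * f t) = weighted_norm f"
    using f integrable_modulation[of f y]
    by (simp_all add: in_ri_space_def ri_norm_of_def mult.left_commute)
qed

lemma translated_weight_bound:
  assumes f: "admissible f"
  shows "\<rho>Y (\<lambda>x. ennreal (v (x - y) * cmod (fourier f x))) \<le> ennreal C * weighted_norm f"
proof -
  have [measurable]: "(\<lambda>x. fourier f (x + y)) \<in> borel_measurable lebesgue"
    using f by (intro measurable_comp_lebesgue_preserving[OF lebesgue_preserving_add_right]
        borel_measurable_lebesgue_if_borel fourier_measurable) simp
  have "\<rho>Y (\<lambda>x. ennreal (v (x - y) * cmod (fourier f (x - y + y))))
      = \<rho>Y (\<lambda>x. ennreal (v x * cmod (fourier f (x + y))))"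
    by (intro ri_norm_lebesgue_preserving[OF ri_norm_Y lebesgue_preserving_diff_right]) measurable
  also have "\<dots> = ri_norm_of \<rho>Y (\<lambda>x. complex_of_real (v x) * fourier (\<lambda>t. cis (- (2 * pi * (y \<bullet> t))) * f t) x)"
    by (simp add: ri_norm_of_def fourier_modulation norm_mult v_nonneg)
  also have "\<dots> \<le> ennreal C * weighted_norm (\<lambda>t. cis (- (2 * pi * (y \<bullet> t))) * f t)"
    using admissible_modulation(1)[OF f, of y] by (intro inequality) auto
  also have "\<dots> = ennreal C * weighted_norm f"
    by (simp only: admissible_modulation(2)[OF f])
  finally show ?thesis
    by simp
qed

lemma conv_weight_bound:
  assumes \<alpha>: "\<alpha> \<in> alpha_class" and f: "admissible f"
  shows "\<rho>Y (\<lambda>x. conv v \<alpha> x * ennreal (cmod (fourier f x))) \<le> ennreal C * weighted_norm f"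
proof (rule ri_norm_conv_mult_le[OF ri_norm_Y v_measurable v_nonneg])
  have [measurable]: "fourier f \<in> borel_measurable borel"
    using f by (simp add: fourier_measurable)
  show "(\<lambda>x. cmod (fourier f x)) \<in> borel_measurable borel"
    by measurable
qed (use \<alpha> translated_weight_bound[OF f] in \<open>auto simp: alpha_class_def less_imp_le\<close>)

lemma conv_weighted_inequality:
  assumes \<alpha>: "\<alpha> \<in> alpha_class" and f: "admissible f"
  shows "in_ri_space \<rho>Y (\<lambda>x. complex_of_real (enn2real (conv v \<alpha> x)) * fourier f x) \<and>
    ri_norm_of \<rho>Y (\<lambda>x. complex_of_real (enn2real (conv v \<alpha> x)) * fourier f x) \<le> ennreal C * weighted_norm f"
proof -
  have [measurable]: "conv v \<alpha> \<in> borel_measurable lebesgue"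
    using \<alpha> by (intro measurable_conv v_measurable v_nonneg) (auto simp: alpha_class_def less_imp_le)
  have [measurable]: "fourier f \<in> borel_measurable lebesgue"
    using f by (intro borel_measurable_lebesgue_if_borel fourier_measurable) simp
  have "ri_norm_of \<rho>Y (\<lambda>x. complex_of_real (enn2real (conv v \<alpha> x)) * fourier f x)
      \<le> \<rho>Y (\<lambda>x. conv v \<alpha> x * ennreal (cmod (fourier f x)))"
    unfolding ri_norm_of_def
  proof (intro ri_norm_mono[OF ri_norm_Y] AE_I2)
    fix x
    have "ennreal (enn2real (conv v \<alpha> x)) \<le> conv v \<alpha> x"
      by (cases "conv v \<alpha> x") simp_all
    then show "ennreal (cmod (complex_of_real (enn2real (conv v \<alpha> x)) * fourier f x))
        \<le> conv v \<alpha> x * ennreal (cmod (fourier f x))"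
      by (simp add: norm_mult ennreal_mult' mult_right_mono)
  qed measurable
  also have "\<dots> \<le> ennreal C * weighted_norm f"
    by (rule conv_weight_bound[OF \<alpha> f])
  finally have "ri_norm_of \<rho>Y (\<lambda>x. complex_of_real (enn2real (conv v \<alpha> x)) * fourier f x)
      \<le> ennreal C * weighted_norm f" .
  moreover have "ennreal C * weighted_norm f < \<infinity>"
    using f by (simp add: in_ri_space_def ennreal_mult_less_top)
  ultimately show ?thesis
    unfolding in_ri_space_def by (auto intro: le_less_trans)
qed

lemma indicator_admissible:
  assumes E: "E \<in> sets lebesgue" "emeasure lebesgue E < \<infinity>"
    and u_le: "\<And>x. x \<in> E \<Longrightarrow> u x \<le> c" and c: "0 \<le> c"
  shows "admissible (indicator E)" and "weighted_norm (indicator E) \<le> ennreal c * \<rho>X (indicator E)"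
proof -
  have [measurable]: "E \<in> sets lebesgue"
    by (rule E(1))
  have "weighted_norm (indicator E) \<le> \<rho>X (\<lambda>x. ennreal c * indicator E x)"
    unfolding ri_norm_of_def
    by (intro ri_norm_mono[OF ri_norm_X] AE_I2)
      (use u_le u_nonneg in \<open>auto intro: ennreal_leI split: split_indicator\<close>)
  also have "\<dots> = ennreal c * \<rho>X (indicator E)"
    using c by (intro ri_norm_cmult[OF ri_norm_X]) auto
  finally show bound: "weighted_norm (indicator E) \<le> ennreal c * \<rho>X (indicator E)" .
  have "\<rho>X (indicator E) < \<infinity>"
    using E by (rule ri_norm_indicator_finite[OF ri_norm_X])
  then have "weighted_norm (indicator E) < \<infinity>"
    using bound by (auto simp: ennreal_mult_less_top intro: le_less_trans)
  moreover have "integrable lebesgue (indicator E :: 'a \<Rightarrow> complex)"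
    using E by (intro integrableI_bounded_set[where A=E and B=1]) (auto split: split_indicator)
  ultimately show "admissible (indicator E)"
    by (simp add: in_ri_space_def)
qed

lemma conv_fourier_AE_zero:
  fixes \<alpha> :: "'a \<Rightarrow> real"
  assumes \<alpha>: "\<alpha> \<in> alpha_class" and f: "admissible f" "weighted_norm f = 0"
  shows "AE x in lebesgue. conv v \<alpha> x * ennreal (cmod (fourier f x)) = 0"
proof -
  have "\<rho>Y (\<lambda>x. conv v \<alpha> x * ennreal (cmod (fourier f x))) = 0"
    using conv_weight_bound[OF \<alpha> f(1)] f(2) by simp
  moreover have [measurable]: "conv v \<alpha> \<in> borel_measurable lebesgue"
    using \<alpha> by (intro measurable_conv v_measurable v_nonneg) (auto simp: alpha_class_def less_imp_le)
  moreover have [measurable]: "fourier f \<in> borel_measurable lebesgue"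
    using f(1) by (intro borel_measurable_lebesgue_if_borel fourier_measurable) simp
  ultimately show ?thesis
    by (subst (asm) ri_norm_eq_0_iff[OF ri_norm_Y]) measurable
qed

lemma u_pos_AE:
  fixes \<alpha> :: "'a \<Rightarrow> real"
  assumes \<alpha>: "\<alpha> \<in> alpha_class" and v_nonzero: "\<not> (AE x in lebesgue. v x = 0)"
  shows "AE x in lebesgue. 0 < u x"
proof (rule ccontr)
  define Z where "Z = {x. u x = 0}"
  have Z: "Z \<in> sets lebesgue"
    using borel_measurable_vimage[OF u_measurable, of 0] by (simp add: Z_def vimage_def)
  assume "\<not> (AE x in lebesgue. 0 < u x)"
  then have "emeasure lebesgue Z \<noteq> 0"
    using Z u_nonneg by (auto simp: Z_def null_sets_def less_le intro: AE_I'[of Z])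
  then obtain r where r: "0 < r" and E_nonzero: "emeasure lebesgue (Z \<inter> ball 0 r) \<noteq> 0"
    using exists_ball_inter_emeasure_nonzero[OF Z] by blast
  define E where "E = Z \<inter> ball 0 r"
  have E_sets: "E \<in> sets lebesgue" and E_finite: "emeasure lebesgue E < \<infinity>"
    using Z emeasure_inter_ball_finite[OF Z] by (auto simp: E_def)
  have "admissible (indicator E)" "weighted_norm (indicator E) \<le> ennreal 0 * \<rho>X (indicator E)"
    using indicator_admissible[OF E_sets E_finite, of 0] by (auto simp: E_def Z_def)
  then have "AE x in lebesgue. conv v \<alpha> x * ennreal (cmod (fourier (indicator E) x)) = 0"
    by (intro conv_fourier_AE_zero[OF \<alpha>]) simp_all
  moreover have "conv v \<alpha> x * ennreal (cmod (fourier (indicator E) x)) \<noteq> 0"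
    if "x \<in> ball 0 (1 / (8 * r))" for x
  proof -
    have "fourier (indicator E) x \<noteq> 0"
      using E_sets E_finite E_nonzero that r
      by (intro fourier_indicator_nonzero[where r=r]) (auto simp: E_def field_simps)
    moreover have "0 < conv v \<alpha> x"
      using \<alpha> v_measurable v_nonneg v_nonzero by (intro conv_pos) (auto simp: alpha_class_def)
    ultimately show ?thesis
      by simp
  qed
  ultimately have "AE x in lebesgue. x \<notin> ball (0::'a) (1 / (8 * r))"
    by (auto elim!: eventually_mono)
  then have "ball (0::'a) (1 / (8 * r)) \<in> null_sets lebesgue"
    by (subst AE_iff_null_sets) auto
  moreover have "emeasure lebesgue (ball (0::'a) (1 / (8 * r))) \<noteq> 0"
    using r by (intro emeasure_ball_pos) simp
  ultimately show False
    by (simp add: null_sets_def)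
qed

lemma exists_admissible_fourier_ge_on_cube:
  obtains f c where "admissible f" "0 < c" "\<And>x. x \<in> cube 1 \<Longrightarrow> c \<le> cmod (fourier f x)"
proof -
  define r where "r = 1 / (4 * real DIM('a))"
  have r: "0 < r"
    by (simp add: r_def)
  obtain N :: nat where N: "emeasure lebesgue (ball 0 r \<inter> {x \<in> space lebesgue. u x \<le> real N}) \<noteq> 0"
    using exists_sublevel_emeasure_nonzero[OF _ emeasure_ball_pos[OF r] u_measurable] by auto
  define E where "E = ball 0 r \<inter> {x \<in> space lebesgue. u x \<le> real N}"
  have [measurable]: "ball 0 r \<in> sets (lebesgue :: 'a measure)"
    by (intro sets_completionI_sets) simp
  have E_sets: "E \<in> sets lebesgue"
    unfolding E_def by measurable
  then have E_finite: "emeasure lebesgue E < \<infinity>"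
    using emeasure_mono[of E "ball 0 r" lebesgue] emeasure_lborel_ball_finite[of "0::'a" r]
    by (auto simp: E_def)
  have "admissible (indicator E)"
    using indicator_admissible[OF E_sets E_finite, of "real N"] by (auto simp: E_def)
  moreover have "0 < measure lebesgue E / 2"
  proof -
    have "emeasure lebesgue E \<noteq> 0"
      using N by (simp add: E_def)
    then show ?thesis
      using E_finite by (simp add: emeasure_eq_ennreal_measure zero_less_measure_iff)
  qed
  moreover have "measure lebesgue E / 2 \<le> cmod (fourier (indicator E) x)" if "x \<in> cube 1" for x
  proof (rule cmod_fourier_indicator_ge[OF E_sets E_finite])
    show "E \<subseteq> ball 0 r"
      by (auto simp: E_def)
    have "norm x * r \<le> real DIM('a) * 1 / 2 * r"
      using norm_le_if_in_cube[OF that] r by (intro mult_right_mono) auto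
    then show "norm x * r \<le> 1 / 8"
      by (simp add: r_def)
  qed
  ultimately show thesis
    by (rule that)
qed

lemma cube_weight_bound:
  obtains B where "B < \<infinity>"
    "\<And>a y. \<rho>Y (\<lambda>x. ennreal (v (x - y) * indicator (cube 1) (x - a))) \<le> B"
proof -
  obtain f c where f: "admissible f" and c: "0 < c"
    and ge: "\<And>x. x \<in> cube 1 \<Longrightarrow> c \<le> cmod (fourier f x)"
    using exists_admissible_fourier_ge_on_cube by blast
  have "\<rho>Y (\<lambda>x. ennreal (v (x - y) * indicator (cube 1) (x - a)))
      \<le> ennreal (1 / c) * (ennreal C * weighted_norm f)" for a y
  proof -
    define g where "g = (\<lambda>t. cis (- (2 * pi * ((- a) \<bullet> t))) * f t)"
    have g: "admissible g" "weighted_norm g = weighted_norm f"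
      using admissible_modulation[OF f, of "- a"] by (simp_all add: g_def)
    have fourier_g: "fourier g x = fourier f (x - a)" for x
      unfolding g_def using fourier_modulation[of "- a" f x] by simp
    have [measurable]: "fourier g \<in> borel_measurable lebesgue"
      using g(1) by (intro borel_measurable_lebesgue_if_borel fourier_measurable) simp
    have [measurable]: "(\<lambda>x. v (x - y)) \<in> borel_measurable lebesgue" "(\<lambda>x. x - a) \<in> lebesgue \<rightarrow>\<^sub>M lebesgue"
      using measurable_comp_lebesgue_preserving[OF lebesgue_preserving_diff_right v_measurable]
        lebesgue_preserving_diff_right[of a] by (auto simp: lebesgue_preserving_def)
    have "v (x - y) * indicator (cube 1) (x - a) \<le> 1 / c * (v (x - y) * cmod (fourier g x))" for x
    proof (cases "x - a \<in> cube 1")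
      case True
      then have "v (x - y) * 1 \<le> v (x - y) * (cmod (fourier g x) / c)"
        using ge[of "x - a"] c v_nonneg by (intro mult_left_mono) (simp_all add: fourier_g)
      then show ?thesis
        using True by simp
    qed (use v_nonneg c in simp)
    then have "\<rho>Y (\<lambda>x. ennreal (v (x - y) * indicator (cube 1) (x - a)))
        \<le> \<rho>Y (\<lambda>x. ennreal (1 / c) * ennreal (v (x - y) * cmod (fourier g x)))"
      using c by (intro ri_norm_mono[OF ri_norm_Y] AE_I2) (auto simp: ennreal_mult'[symmetric] intro: ennreal_leI)
    also have "\<dots> = ennreal (1 / c) * \<rho>Y (\<lambda>x. ennreal (v (x - y) * cmod (fourier g x)))"
      using c by (intro ri_norm_cmult[OF ri_norm_Y]) auto
    also have "\<dots> \<le> ennreal (1 / c) * (ennreal C * weighted_norm f)"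
      using translated_weight_bound[OF g(1)] g(2) by (intro mult_left_mono) simp_all
    finally show ?thesis .
  qed
  moreover have "ennreal (1 / c) * (ennreal C * weighted_norm f) < \<infinity>"
    using f by (simp add: in_ri_space_def ennreal_mult_less_top)
  ultimately show thesis
    by (rule that[rotated])
qed

lemma conv_cube_bounded: "\<exists>B::real. \<forall>x. conv v (qcube 1) x \<le> ennreal B"
proof -
  obtain B where B: "B < \<infinity>" "\<And>a y. \<rho>Y (\<lambda>x. ennreal (v (x - y) * indicator (cube 1) (x - a))) \<le> B"
    using cube_weight_bound by blast
  obtain K :: real
    where K: "\<forall>g\<in>borel_measurable lebesgue. (\<integral>\<^sup>+x\<in>cube 1. g x \<partial>lebesgue) \<le> ennreal K * \<rho>Y g"
    using ri_norm_bounds_set_nn_integral[OF ri_norm_Y cube_in_sets_lebesgue emeasure_cube_finite] by blast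
  have "conv v (qcube 1) a \<le> ennreal K * B" for a
  proof -
    have [measurable]: "(\<lambda>x. v (x - y)) \<in> borel_measurable lebesgue" "(\<lambda>x. v (y - x)) \<in> borel_measurable lebesgue" for y
      using measurable_comp_lebesgue_preserving[OF lebesgue_preserving_diff_right v_measurable]
        measurable_comp_lebesgue_preserving[OF lebesgue_preserving_diff v_measurable] by auto
    define g where "g w = ennreal (v (w - (- a)) * indicator (cube 1) w)" for w
    have g: "g \<in> borel_measurable lebesgue"
      unfolding g_def by measurable
    have "conv v (qcube 1) a = (\<integral>\<^sup>+y. ennreal (v (a - y) * indicator (cube 1) y) \<partial>lebesgue)"
      by (simp add: conv_def qcube_def)
    also have "\<dots> = (\<integral>\<^sup>+w. ennreal (v (a - (0 - w)) * indicator (cube 1) (0 - w)) \<partial>lebesgue)"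
      by (rule nn_integral_lebesgue_preserving[OF lebesgue_preserving_diff, symmetric]) measurable
    also have "\<dots> = (\<integral>\<^sup>+w\<in>cube 1. g w \<partial>lebesgue)"
      by (intro nn_integral_cong) (simp add: g_def add.commute split: split_indicator)
    also have "\<dots> \<le> ennreal K * \<rho>Y g"
      using K g by blast
    also have "\<dots> \<le> ennreal K * B"
      using B(2)[where a=0 and y="- a"] by (intro mult_left_mono) (simp_all add: g_def[abs_def])
    finally show ?thesis .
  qed
  moreover have "ennreal K * B < \<infinity>"
    using B(1) by (simp add: ennreal_mult_less_top)
  ultimately show ?thesis
    by (intro exI[of _ "enn2real (ennreal K * B)"]) (simp add: ennreal_enn2real_if)
qed

lemma conv_finite_AE_on_translated_cube:
  fixes \<alpha> :: "'a \<Rightarrow> real"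
  assumes \<alpha>: "\<alpha> \<in> alpha_class"
  shows "AE x in lebesgue. x \<in> (\<lambda>x. x - a) -` cube 1 \<longrightarrow> conv v \<alpha> x < \<infinity>"
proof -
  obtain B where B: "B < \<infinity>" "\<And>a y. \<rho>Y (\<lambda>x. ennreal (v (x - y) * indicator (cube 1) (x - a))) \<le> B"
    using cube_weight_bound by blast
  define F where "F x = (indicator (cube 1) (x - a) :: real)" for x
  have [measurable]: "F \<in> borel_measurable borel" "F \<in> borel_measurable lebesgue"
    unfolding F_def by (measurable, intro borel_measurable_lebesgue_if_borel) measurable
  have [measurable]: "conv v \<alpha> \<in> borel_measurable lebesgue"
    using \<alpha> by (intro measurable_conv v_measurable v_nonneg) (auto simp: alpha_class_def less_imp_le)
  have "\<rho>Y (\<lambda>x. conv v \<alpha> x * ennreal (F x)) \<le> B"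
    using \<alpha> B(2) unfolding F_def
    by (intro ri_norm_conv_mult_le[OF ri_norm_Y v_measurable v_nonneg]) (auto simp: alpha_class_def less_imp_le)
  then have "\<rho>Y (\<lambda>x. conv v \<alpha> x * ennreal (F x)) < \<infinity>"
    using B(1) by (rule le_less_trans)
  moreover have "emeasure lebesgue ((\<lambda>x. x - a) -` cube 1) = emeasure lebesgue (cube 1 :: 'a set)"
    by (rule emeasure_vimage_lebesgue_preserving[OF lebesgue_preserving_diff_right cube_in_sets_lebesgue])
  then have "emeasure lebesgue ((\<lambda>x. x - a) -` cube 1) < \<infinity>"
    using emeasure_cube_finite by metis
  ultimately have "AE x in lebesgue. x \<in> (\<lambda>x. x - a) -` cube 1 \<longrightarrow> conv v \<alpha> x * ennreal (F x) < \<infinity>"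
    by (intro ri_norm_finite_imp_AE_finite[OF ri_norm_Y] sets_vimage_lebesgue_preserving
        lebesgue_preserving_diff_right cube_in_sets_lebesgue) measurable
  then show ?thesis
    by (rule eventually_mono) (simp add: F_def)
qed

lemma conv_finite_AE:
  fixes \<alpha> :: "'a \<Rightarrow> real"
  assumes \<alpha>: "\<alpha> \<in> alpha_class"
  shows "AE x in lebesgue. conv v \<alpha> x < \<infinity>"
proof (rule AE_if_AE_on_open_cover[where \<U> = "range (\<lambda>a::'a. (\<lambda>x. x - a) -` cube 1)"])
  show "open U" if "U \<in> range (\<lambda>a::'a. (\<lambda>x. x - a) -` cube 1)" for U
    using that by (auto intro: continuous_open_vimage[OF open_cube])
  show "\<Union> (range (\<lambda>a::'a. (\<lambda>x. x - a) -` cube 1)) = UNIV"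
    using zero_in_cube[of 1] by force
qed (use conv_finite_AE_on_translated_cube[OF \<alpha>] in blast)

end

theorem theorem2p2:
  fixes \<rho>X \<rho>Y :: "('a::euclidean_space \<Rightarrow> ennreal) \<Rightarrow> ennreal"
    and \<alpha> u v :: "'a \<Rightarrow> real"
    and C :: real
  assumes X: "ri_norm \<rho>X" and Y: "ri_norm \<rho>Y"
    and alpha: "\<alpha> \<in> alpha_class"
    and u_meas: "u \<in> borel_measurable lebesgue" and u_nonneg: "\<forall>x. 0 \<le> u x"
    and v_meas: "v \<in> borel_measurable lebesgue" and v_nonneg: "\<forall>x. 0 \<le> v x"
    and v_nonzero: "\<not> (AE x in lebesgue. v x = 0)"
    and C_pos: "C > 0"
    and ineq: "\<forall>f. integrable lebesgue f \<and> in_ri_space \<rho>X (\<lambda>x. complex_of_real (u x) * f x) \<longrightarrow>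
        in_ri_space \<rho>Y (\<lambda>x. complex_of_real (v x) * fourier f x) \<and>
        ri_norm_of \<rho>Y (\<lambda>x. complex_of_real (v x) * fourier f x)
          \<le> ennreal C * ri_norm_of \<rho>X (\<lambda>x. complex_of_real (u x) * f x)"
  shows "(AE x in lebesgue. 0 < u x)
    \<and> (\<exists>B::real. \<forall>x. conv v (qcube 1) x \<le> ennreal B)
    \<and> (AE x in lebesgue. 0 < conv v \<alpha> x \<and> conv v \<alpha> x < \<infinity>)
    \<and> (\<forall>f. integrable lebesgue f \<and> in_ri_space \<rho>X (\<lambda>x. complex_of_real (u x) * f x) \<longrightarrow>
        in_ri_space \<rho>Y (\<lambda>x. complex_of_real (enn2real (conv v \<alpha> x)) * fourier f x) \<and>
        ri_norm_of \<rho>Y (\<lambda>x. complex_of_real (enn2real (conv v \<alpha> x)) * fourier f x)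
          \<le> ennreal C * ri_norm_of \<rho>X (\<lambda>x. complex_of_real (u x) * f x))"
proof -
  interpret weighted_fourier_inequality \<rho>X \<rho>Y u v C
    using X Y u_meas u_nonneg v_meas v_nonneg ineq by unfold_locales blast+
  have \<alpha>: "\<alpha> \<in> borel_measurable lebesgue" "\<And>x. 0 < \<alpha> x"
    using alpha by (auto simp: alpha_class_def)
  have "AE x in lebesgue. 0 < conv v \<alpha> x \<and> conv v \<alpha> x < \<infinity>"
    using conv_finite_AE[OF alpha] conv_pos[OF v_meas v_nonneg v_nonzero \<alpha>] by (auto elim: eventually_mono)
  with u_pos_AE[OF alpha v_nonzero] conv_cube_bounded conv_weighted_inequality[OF alpha]
  show ?thesis
    by blast
qed

end
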